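(* Let $\{\mathcal X^\varepsilon:\varepsilon\ge 0\}$ be a Markov perturbation of a synchronized DRN $\mathcal X^0$. Then there is $\varepsilon_1>0$ such that for every $0\le\varepsilon<\varepsilon_1$ there exists an invariant distribution $p_\varepsilon:\Omega\to\Sigma_1^+$ of $\mathcal X^\varepsilon$ (i.e. $P_{\mathcal X^\varepsilon}(1,\omega)p_\varepsilon(\omega)=p_\varepsilon(\theta\omega)$ for $\mu$-a.e. $\omega$) with the following properties: (i) $p_\varepsilon$ is pull-back attracting: for every $q\in\Sigma_1^+$ and $\mu$-a.e. $\omega$, $\lim_{n\to\infty}|P_{\mathcal X^\varepsilon}(n,\theta^{-n}\omega)q-p_\varepsilon(\omega)|=0$; (ii) $p_\varepsilon$ is forward attracting: for every $q\in\Sigma_1^+$ and $\mu$-a.e. $\omega$, $\lim_{n\to\infty}|P_{\mathcal X^\varepsilon}(n,\omega)q-p_\varepsilon(\theta^n\omega)|=0$; (iii) $p_\varepsilon$ is continuous at $\varepsilon=0$: there is an $\mathcal F$-measurable $J:\Omega\to\mathbb K$ such that for $\mu$-a.e. $\omega$, $\lim_{\varepsilon\to0}p_\varepsilon(\omega)=e_{J(\omega)}=p_0(\omega)$. Moreover, if $\mathcal X^0$ is uniformly synchronized, then the convergence in (iii) is uniform on a set of full $\mu$-measure.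
   Context: Let $k\ge2$, $S=\{s_1,\dots,s_k\}$, $\mathbb K=\{1,\dots,k\}$, $e_1,\dots,e_k$ the canonical basis of $\mathbb R^k$. $|\cdot|$ denotes the $\ell^1$-norm on $\mathbb R^k$ and the induced operator norm on $\mathbb R^{k\times k}$ (max absolute column sum). For $a\in\mathbb R$, $\Sigma_a=\{v\in\mathbb R^k:\sum_jv_j=a\}$ and $\Sigma_1^+=\{v\in\Sigma_1:v_j\ge0\ \forall j\}$. $\Theta=(\Omega,\mathcal F,\mu,\theta)$ is an invertible metric dynamical system: $(\Omega,\mathcal F,\mu)$ is a standard probability space and $\theta:\Omega\to\Omega$ is invertible, ergodic and $\mu$-preserving. A Markov random network (MRN) over $\Theta$ is a stochastic process $\mathcal X=(X_n)_{n\in\mathbb N_0}$ with state space $S\times\Omega$ such that (MRN1) $\omega\mapsto\mathbb P\{X_n=(s_i,\theta^n\omega)\mid X_0=(s_j,\omega)\}$ is $\mathcal F$-measurable for all $n,i,j$; (MRN2) $\sum_{i}\mathbb P\{X_n=(s_i,\theta^{n-m}\omega)\mid X_m=(s_j,\omega)\}=1$ for all $j$, all $n\ge m$, and $\mu$-a.e. $\omega$; (MRN3) $\mathbb P\{X_{n+1}=(s_{i_{n+1}},\theta^{n+1}\omega)\mid X_n=(s_{i_n},\theta^n\omega)\}=\mathbb P\{X_{n+1}=(s_{i_{n+1}},\theta^{n+1}\omega)\mid X_0=(s_{i_0},\omega),\dots,X_n=(s_{i_n},\theta^n\omega)\}$ for all $n$, all indices, $\mu$-a.e. $\omega$. Its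 transition cocycle is $P_{\mathcal X}(n,\omega)=(p_{i,j}(n,\omega))_{i,j\in\mathbb K}$, $p_{i,j}(n,\omega)=\mathbb P\{X_n=(s_i,\theta^n\omega)\mid X_0=(s_j,\omega)\}$; for $\mu$-a.e. $\omega$ it is column-stochastic, $P_{\mathcal X}(0,\omega)=I_k$, and $P_{\mathcal X}(m+n,\omega)=P_{\mathcal X}(m,\theta^n\omega)P_{\mathcal X}(n,\omega)$. A deterministic random network (DRN) is an MRN $\mathcal X^0$ whose transition cocycle $P^0:=P_{\mathcal X^0}$ has all entries in $\{0,1\}$ for all $n$ and $\mu$-a.e. $\omega$; it defines maps $T_{\mathcal X^0}(n,\omega):S\to S$ by $T_{\mathcal X^0}(n,\omega)(s_j)=s_i$ iff $P^0(n,\omega)_{i,j}=1$. $\mathcal X^0$ is synchronized if there is an $\mathcal F$-measurable $N:\Omega\to\mathbb N$ such that for $\mu$-a.e. $\omega$ and all $i,j$, $T_{\mathcal X^0}(n,\omega)(s_i)=T_{\mathcal X^0}(n,\omega)(s_j)$ for all $n\ge N(\omega)$; it is uniformly synchronized if such $N$ can be chosen $\mu$-a.e. constant. A Markov perturbation of a DRN $\mathcal X^0$ is a family $\{\mathcal X^\varepsilon:\varepsilon\ge0\}$ of MRNs over $\Theta$ (with $\mathcal X^\varepsilon$ at $\varepsilon=0$ being $\mathcal X^0$) such that $|P_{\mathcal X^\varepsilon}(1,\omega)-P^0(1,\omega)|\le\varepsilon$ for all $\varepsilon\ge0$ and $\mu$-a.e. $\omega$. An invariant distribution of an MRN $\mathcal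 X$ is an $\mathcal F$-measurable $p:\Omega\to\Sigma_1^+$ with $P_{\mathcal X}(n,\omega)p(\omega)=p(\theta^n\omega)$ for all $n\in\mathbb N_0$ and $\mu$-a.e. $\omega$. *)

theory Defs
  imports "HOL-Probability.Probability"
begin

text \<open>States s_1..s_k are represented by a finite index type 'k (k = CARD('k)).
  Vectors in R^k are real^'k, k x k matrices are real^'k^'k; e_j = axis j 1.\<close>

definition l1norm :: "real^'k::finite \<Rightarrow> real" where
  "l1norm v = (\<Sum>i\<in>UNIV. \<bar>v $ i\<bar>)"

text \<open>Induced operator norm of the l1 norm: maximal absolute column sum.\<close>
definition opnorm1 :: "real^'k::finite^'k \<Rightarrow> real" where
  "opnorm1 A = Max (range (\<lambda>j. \<Sum>i\<in>UNIV. \<bar>A $ i $ j\<bar>))"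

definition simplex1 :: "(real^'k::finite) set" where
  "simplex1 = {v. (\<forall>i. 0 \<le> v $ i) \<and> (\<Sum>i\<in>UNIV. v $ i) = 1}"

definition column_stochastic :: "real^'k::finite^'k \<Rightarrow> bool" where
  "column_stochastic A \<longleftrightarrow> (\<forall>i j. 0 \<le> A $ i $ j) \<and> (\<forall>j. (\<Sum>i\<in>UNIV. A $ i $ j) = 1)"

definition standard_prob_space :: "'a::polish_space measure \<Rightarrow> bool" where
  "standard_prob_space M \<longleftrightarrow> prob_space M \<and>
     (\<exists>N. sets N = sets borel \<and> (M = N \<or> M = completion N))"

definition invertible_ergodic_mds :: "'a::polish_space measure \<Rightarrow> ('a \<Rightarrow> 'a) \<Rightarrow> bool" where
  "invertible_ergodic_mds M \<theta> \<longleftrightarrow>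
     standard_prob_space M \<and>
     bij_betw \<theta> (space M) (space M) \<and>
     \<theta> \<in> M \<rightarrow>\<^sub>M M \<and> inv_into (space M) \<theta> \<in> M \<rightarrow>\<^sub>M M \<and>
     distr M M \<theta> = M \<and>
     (\<forall>A\<in>sets M. \<theta> -` A \<inter> space M = A \<longrightarrow> measure M A = 0 \<or> measure M A = 1)"

text \<open>A Markov random network over (M, \<theta>) is represented by its transition cocycle
  P n \<omega> (entry (i,j) = probability of going from s_j at \<omega> to s_i at \<theta>^n \<omega> in n steps).\<close>
definition MRN_cocycle :: "'a measure \<Rightarrow> ('a \<Rightarrow> 'a) \<Rightarrow> (nat \<Rightarrow> 'a \<Rightarrow> real^'k::finite^'k) \<Rightarrow> bool" where
  "MRN_cocycle M \<theta> P \<longleftrightarrow>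
     (\<forall>n i j. (\<lambda>\<omega>. P n \<omega> $ i $ j) \<in> borel_measurable M) \<and>
     (AE \<omega> in M. \<forall>n. column_stochastic (P n \<omega>)) \<and>
     (AE \<omega> in M. P 0 \<omega> = mat 1) \<and>
     (AE \<omega> in M. \<forall>m n. P (m + n) \<omega> = P m ((\<theta> ^^ n) \<omega>) ** P n \<omega>)"

definition DRN_cocycle :: "'a measure \<Rightarrow> ('a \<Rightarrow> 'a) \<Rightarrow> (nat \<Rightarrow> 'a \<Rightarrow> real^'k::finite^'k) \<Rightarrow> bool" where
  "DRN_cocycle M \<theta> P \<longleftrightarrow> MRN_cocycle M \<theta> P \<and>
     (AE \<omega> in M. \<forall>n i j. P n \<omega> $ i $ j \<in> {0, 1})"

definition drn_map :: "(nat \<Rightarrow> 'a \<Rightarrow> real^'k::finite^'k) \<Rightarrow> nat \<Rightarrow> 'a \<Rightarrow> 'k \<Rightarrow> 'k" where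
  "drn_map P n \<omega> j = (THE i. P n \<omega> $ i $ j = 1)"

definition synchronized :: "'a measure \<Rightarrow> ('a \<Rightarrow> 'a) \<Rightarrow> (nat \<Rightarrow> 'a \<Rightarrow> real^'k::finite^'k) \<Rightarrow> bool" where
  "synchronized M \<theta> P \<longleftrightarrow> DRN_cocycle M \<theta> P \<and>
     (\<exists>N::'a \<Rightarrow> nat. N \<in> M \<rightarrow>\<^sub>M count_space UNIV \<and> (\<forall>\<omega>\<in>space M. 1 \<le> N \<omega>) \<and>
        (AE \<omega> in M. \<forall>i j. \<forall>n\<ge>N \<omega>. drn_map P n \<omega> i = drn_map P n \<omega> j))"

definition uniformly_synchronized :: "'a measure \<Rightarrow> ('a \<Rightarrow> 'a) \<Rightarrow> (nat \<Rightarrow> 'a \<Rightarrow> real^'k::finite^'k) \<Rightarrow> bool" where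
  "uniformly_synchronized M \<theta> P \<longleftrightarrow> DRN_cocycle M \<theta> P \<and>
     (\<exists>N::'a \<Rightarrow> nat. N \<in> M \<rightarrow>\<^sub>M count_space UNIV \<and> (\<forall>\<omega>\<in>space M. 1 \<le> N \<omega>) \<and>
        (\<exists>c. AE \<omega> in M. N \<omega> = c) \<and>
        (AE \<omega> in M. \<forall>i j. \<forall>n\<ge>N \<omega>. drn_map P n \<omega> i = drn_map P n \<omega> j))"

text \<open>Markov perturbation: X \<epsilon> is the cocycle of the MRN X^\<epsilon> (for \<epsilon> \<ge> 0), X 0 is the DRN.\<close>
definition markov_perturbation :: "'a measure \<Rightarrow> ('a \<Rightarrow> 'a) \<Rightarrow> (real \<Rightarrow> nat \<Rightarrow> 'a \<Rightarrow> real^'k::finite^'k) \<Rightarrow> bool" where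
  "markov_perturbation M \<theta> X \<longleftrightarrow> DRN_cocycle M \<theta> (X 0) \<and>
     (\<forall>\<epsilon>\<ge>0. MRN_cocycle M \<theta> (X \<epsilon>) \<and>
        (AE \<omega> in M. opnorm1 (X \<epsilon> 1 \<omega> - X 0 1 \<omega>) \<le> \<epsilon>))"

definition invariant_distribution :: "'a measure \<Rightarrow> ('a \<Rightarrow> 'a) \<Rightarrow> (nat \<Rightarrow> 'a \<Rightarrow> real^'k::finite^'k) \<Rightarrow> ('a \<Rightarrow> real^'k) \<Rightarrow> bool" where
  "invariant_distribution M \<theta> P p \<longleftrightarrow> p \<in> borel_measurable M \<and> (\<forall>\<omega>\<in>space M. p \<omega> \<in> simplex1) \<and>
     (AE \<omega> in M. \<forall>n. P n \<omega> *v p \<omega> = p ((\<theta> ^^ n) \<omega>))"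

end

theory Submission
  imports Defs
begin

(* Over n steps the perturbed transition matrices differ from the deterministic ones by at most
   n \<epsilon> in operator norm. If the deterministic network synchronizes within L steps from some state of
   the environment, its L-step matrix sends every distribution to one vertex and kills every
   zero-sum vector, so for L \<epsilon> \<le> 1/2 the perturbed L-step matrix halves the l1 norm of zero-sum
   vectors. By ergodicity almost every orbit, forward and backward, meets such blocks infinitely
   often, so the products of the perturbed matrices contract the simplex to a point: the pull-back
   images of any distribution converge to a random distribution p_\<epsilon>, which is invariant and also
   attracts forward in time. Comparing once more with the deterministic network, p_\<epsilon>(\<omega>) is within
   n \<epsilon> of the vertex e_J(\<omega>) it synchronizes to, where n is a synchronization time along the backward
   orbit; this gives continuity at \<epsilon> = 0, uniformly when n can be chosen constant. *)

lemma borel_measurable_vec_cart: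
  fixes f :: "'a \<Rightarrow> real^'k::finite"
  assumes "\<And>i. (\<lambda>x. f x $ i) \<in> borel_measurable M"
  shows "f \<in> borel_measurable M"
proof (subst borel_measurable_euclidean_space, intro ballI)
  fix b :: "real^'k" assume "b \<in> Basis"
  then obtain i where "b = axis i 1" by (auto simp: Basis_vec_def)
  then show "(\<lambda>x. f x \<bullet> b) \<in> borel_measurable M" using assms[of i] by (simp add: inner_axis)
qed

section \<open>The l1 norm and column stochastic matrices\<close>

lemma l1norm_nonneg: "0 \<le> l1norm v"
  unfolding l1norm_def by (simp add: sum_nonneg)

lemma l1norm_add_le: "l1norm (v + w) \<le> l1norm v + l1norm (w::real^'k::finite)"
  unfolding l1norm_def by (subst sum.distrib[symmetric], rule sum_mono) (simp add: abs_triangle_ineq)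

lemma l1norm_minus_commute: "l1norm (v - w) = l1norm (w - v)"
  unfolding l1norm_def by (simp add: abs_minus_commute)

lemma l1norm_triangle_diff: "l1norm (u - w) \<le> l1norm (u - v) + l1norm (v - (w::real^'k::finite))"
  using l1norm_add_le[of "u - v" "v - w"] by simp

lemma norm_le_l1norm: "norm v \<le> l1norm v"
  unfolding l1norm_def by (rule norm_le_l1_cart)

lemma l1norm_le_zero_imp_zero: "l1norm (v::real^'k::finite) \<le> 0 \<Longrightarrow> v = 0"
proof -
  assume "l1norm v \<le> 0"
  then have "norm v \<le> 0" using norm_le_l1norm[of v] by linarith
  then show "v = 0" by simp
qed

lemma l1norm_le_card_norm: "l1norm (v::real^'k::finite) \<le> real CARD('k) * norm v"
proof -
  have "(\<Sum>i\<in>UNIV. \<bar>v$i\<bar>) \<le> (\<Sum>i\<in>(UNIV::'k set). norm v)"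
    by (rule sum_mono) (rule component_le_norm_cart)
  then show ?thesis by (simp add: l1norm_def)
qed

lemma tendsto_l1norm_iff:
  "((\<lambda>n. l1norm (f n - (L::real^'k::finite))) \<longlonglongrightarrow> 0) \<longleftrightarrow> f \<longlonglongrightarrow> L"
proof
  assume a: "(\<lambda>n. l1norm (f n - L)) \<longlonglongrightarrow> 0"
  have "(\<lambda>n. norm (f n - L)) \<longlonglongrightarrow> 0"
    by (rule Lim_null_comparison[OF _ a]) (simp add: norm_le_l1norm)
  then show "f \<longlonglongrightarrow> L" by (rule LIM_zero_cancel[OF tendsto_norm_zero_cancel])
next
  assume "f \<longlonglongrightarrow> L"
  then have g: "(\<lambda>n. real CARD('k) * norm (f n - L)) \<longlonglongrightarrow> 0"
    by (intro tendsto_mult_right_zero tendsto_norm_zero LIM_zero)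
  have "\<forall>\<^sub>F n in sequentially. norm (l1norm (f n - L)) \<le> real CARD('k) * norm (f n - L)"
    by (intro always_eventually allI) (simp add: l1norm_nonneg l1norm_le_card_norm)
  then show "(\<lambda>n. l1norm (f n - L)) \<longlonglongrightarrow> 0" by (rule Lim_null_comparison[OF _ g])
qed

lemma LIMSEQ_l1norm_zeroI:
  assumes "\<And>e. e > 0 \<Longrightarrow> \<exists>N. \<forall>n\<ge>N. l1norm (f n) < e"
  shows "(\<lambda>n. l1norm (f n)) \<longlonglongrightarrow> 0"
proof (rule LIMSEQ_I)
  fix r :: real assume "r > 0"
  then obtain N where "\<forall>n\<ge>N. l1norm (f n) < r" using assms by blast
  then show "\<exists>N. \<forall>n\<ge>N. norm (l1norm (f n) - 0) < r" by (auto simp: abs_of_nonneg[OF l1norm_nonneg])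
qed

lemma l1norm_matrix_vector_le: "l1norm (A *v v) \<le> opnorm1 A * l1norm (v::real^'k::finite)"
proof -
  have col: "(\<Sum>i\<in>UNIV. \<bar>A $ i $ j\<bar>) \<le> opnorm1 A" for j
    unfolding opnorm1_def by (rule Max_ge) auto
  have "l1norm (A *v v) = (\<Sum>i\<in>UNIV. \<bar>\<Sum>j\<in>UNIV. A $ i $ j * v $ j\<bar>)"
    by (simp add: l1norm_def matrix_vector_mult_def)
  also have "\<dots> \<le> (\<Sum>i\<in>UNIV. \<Sum>j\<in>UNIV. \<bar>A $ i $ j\<bar> * \<bar>v $ j\<bar>)"
    by (intro sum_mono, rule order_trans[OF sum_abs]) (simp add: abs_mult)
  also have "\<dots> = (\<Sum>j\<in>UNIV. (\<Sum>i\<in>UNIV. \<bar>A $ i $ j\<bar>) * \<bar>v $ j\<bar>)"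
    by (subst sum.swap) (simp add: sum_distrib_right)
  also have "\<dots> \<le> (\<Sum>j\<in>UNIV. opnorm1 A * \<bar>v $ j\<bar>)"
    by (intro sum_mono mult_right_mono col) auto
  also have "\<dots> = opnorm1 A * l1norm v" by (simp add: l1norm_def sum_distrib_left)
  finally show ?thesis .
qed

lemma column_stochastic_opnorm1_le: "column_stochastic A \<Longrightarrow> opnorm1 A \<le> 1"
  unfolding opnorm1_def column_stochastic_def by (auto intro!: Max.boundedI)

lemma column_stochastic_l1norm_le:
  assumes "column_stochastic A"
  shows "l1norm (A *v v) \<le> l1norm v"
proof -
  have "opnorm1 A * l1norm v \<le> 1 * l1norm v"
    using assms by (intro mult_right_mono column_stochastic_opnorm1_le l1norm_nonneg)
  then show ?thesis using l1norm_matrix_vector_le[of A v] by simp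
qed

lemma column_stochastic_sum:
  assumes "column_stochastic A"
  shows "(\<Sum>i\<in>UNIV. (A *v v) $ i) = (\<Sum>i\<in>UNIV. v $ i)"
proof -
  have "(\<Sum>i\<in>UNIV. (A *v v) $ i) = (\<Sum>i\<in>UNIV. \<Sum>j\<in>UNIV. A $ i $ j * v $ j)"
    by (simp add: matrix_vector_mult_def)
  also have "\<dots> = (\<Sum>j\<in>UNIV. \<Sum>i\<in>UNIV. A $ i $ j * v $ j)" by (rule sum.swap)
  also have "\<dots> = (\<Sum>j\<in>UNIV. (\<Sum>i\<in>UNIV. A $ i $ j) * v $ j)" by (simp only: sum_distrib_right)
  finally show ?thesis using assms by (simp add: column_stochastic_def)
qed

lemma column_stochastic_simplex:
  assumes A: "column_stochastic A" and v: "v \<in> simplex1"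
  shows "A *v v \<in> simplex1"
proof -
  have "0 \<le> (A *v v) $ i" for i
    using A v unfolding simplex1_def column_stochastic_def matrix_vector_mult_def
    by (simp add: sum_nonneg)
  then show ?thesis using column_stochastic_sum[OF A, of v] v by (simp add: simplex1_def)
qed

lemma l1norm_simplex: "q \<in> simplex1 \<Longrightarrow> l1norm q = 1"
  unfolding simplex1_def l1norm_def by simp

lemma l1norm_simplex_diff_le: "q \<in> simplex1 \<Longrightarrow> q' \<in> simplex1 \<Longrightarrow> l1norm (q - q') \<le> 2"
  using l1norm_add_le[of q "- q'"] l1norm_simplex[of q] l1norm_simplex[of q']
  by (simp add: l1norm_def)

lemma sum_simplex_diff: "q \<in> simplex1 \<Longrightarrow> q' \<in> simplex1 \<Longrightarrow> (\<Sum>i\<in>UNIV. (q - q') $ i) = 0"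
  unfolding simplex1_def by (simp add: sum_subtractf)

lemma axis_in_simplex: "axis i 1 \<in> simplex1"
  unfolding simplex1_def by (simp add: axis_def)

lemma simplex_limit:
  assumes f: "\<And>n. f n \<in> simplex1" and lim: "f \<longlonglongrightarrow> p"
  shows "p \<in> simplex1"
proof -
  have c: "(\<lambda>n. f n $ i) \<longlonglongrightarrow> p $ i" for i using lim by (rule tendsto_vec_nth)
  have "0 \<le> p $ i" for i
    by (rule LIMSEQ_le_const[OF c]) (use f in \<open>auto simp: simplex1_def\<close>)
  moreover have "(\<lambda>n. \<Sum>i\<in>UNIV. f n $ i) \<longlonglongrightarrow> (\<Sum>i\<in>UNIV. p $ i)"
    by (intro tendsto_sum c)
  moreover have "(\<lambda>n. \<Sum>i\<in>UNIV. f n $ i) = (\<lambda>n. 1)" using f by (simp add: simplex1_def)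
  ultimately have "(\<Sum>i\<in>UNIV. p $ i) = 1" using LIMSEQ_unique tendsto_const by metis
  then show ?thesis using \<open>\<And>i. 0 \<le> p $ i\<close> by (simp add: simplex1_def)
qed

lemma closed_simplex1: "closed (simplex1 :: (real^'k::finite) set)"
  unfolding closed_sequential_limits using simplex_limit by blast

lemma column_stochastic_tendsto:
  assumes A: "column_stochastic A" and f: "f \<longlonglongrightarrow> p"
  shows "(\<lambda>k. A *v f k) \<longlonglongrightarrow> A *v p"
proof -
  have lim: "(\<lambda>k. l1norm (f k - p)) \<longlonglongrightarrow> 0" using f tendsto_l1norm_iff by blast
  have "\<forall>\<^sub>F k in sequentially. norm (l1norm (A *v f k - A *v p)) \<le> l1norm (f k - p)"
    by (intro always_eventually allI)
       (simp add: abs_of_nonneg[OF l1norm_nonneg] column_stochastic_l1norm_le[OF A]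
         matrix_vector_mult_diff_distrib[symmetric])
  then have "(\<lambda>k. l1norm (A *v f k - A *v p)) \<longlonglongrightarrow> 0" by (rule Lim_null_comparison[OF _ lim])
  then show ?thesis using tendsto_l1norm_iff[of "\<lambda>k. A *v f k"] by simp
qed

lemma zero_one_stochastic_ex1:
  assumes A: "column_stochastic A" and z: "\<forall>i j. A $ i $ j \<in> {0, 1}"
  shows "\<exists>!i. A $ i $ j = 1"
proof -
  have col: "(\<Sum>l\<in>UNIV. A $ l $ j) = 1" using A column_stochastic_def by blast
  have "\<exists>i. A $ i $ j = 1"
  proof (rule ccontr)
    assume "\<not> ?thesis"
    then have "\<forall>i. A $ i $ j = 0" using z by blast
    then show False using col by simp
  qed
  moreover have "i = i'" if "A $ i $ j = 1" "A $ i' $ j = 1" for i i'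
  proof (rule ccontr)
    assume ne: "i \<noteq> i'"
    have "A $ i $ j + A $ i' $ j = (\<Sum>l\<in>{i, i'}. A $ l $ j)" using ne by simp
    also have "\<dots> \<le> (\<Sum>l\<in>UNIV. A $ l $ j)"
      using A by (intro sum_mono2) (auto simp: column_stochastic_def)
    finally show False using that col by linarith
  qed
  ultimately show ?thesis by blast
qed

lemma zero_one_stochastic_entry:
  assumes A: "column_stochastic A" and z: "\<forall>i j. A $ i $ j \<in> {0, 1}"
  shows "A $ i $ j = (if i = (THE i. A $ i $ j = 1) then 1 else 0)"
proof -
  from zero_one_stochastic_ex1[OF A z, of j] obtain c
    where c: "A $ c $ j = 1" "\<And>i. A $ i $ j = 1 \<Longrightarrow> i = c" by blast
  then have the_c: "(THE i. A $ i $ j = 1) = c" by blast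
  show ?thesis
  proof (cases "i = c")
    case False
    then have "A $ i $ j \<noteq> 1" using c(2) by blast
    moreover have "A $ i $ j \<in> {0, 1}" using z by blast
    ultimately show ?thesis using False the_c by simp
  qed (use c(1) the_c in simp)
qed

lemma zero_one_stochastic_constant_map:
  assumes A: "column_stochastic A" and z: "\<forall>i j. A $ i $ j \<in> {0, 1}"
    and const: "\<forall>j. (THE i. A $ i $ j = 1) = c"
  shows "A *v v = (\<Sum>j\<in>UNIV. v $ j) *\<^sub>R axis c 1"
proof -
  have "(A *v v) $ i = ((\<Sum>j\<in>UNIV. v $ j) *\<^sub>R axis c 1) $ i" for i
  proof -
    have e: "A $ i $ j = (if i = c then 1 else 0)" for j
      using zero_one_stochastic_entry[OF A z, of i j] const by simp
    have "(A *v v) $ i = (\<Sum>j\<in>UNIV. (if i = c then 1 else 0) * v $ j)"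
      by (simp only: matrix_vector_mult_def vec_lambda_beta e)
    then show ?thesis by (cases "i = c") (simp_all add: axis_def)
  qed
  then show ?thesis by (simp add: vec_eq_iff)
qed

section \<open>Perturbation bounds and contraction of zero-sum vectors\<close>

definition l1_bounded :: "real^'k::finite^'k \<Rightarrow> real \<Rightarrow> bool" where
  "l1_bounded A c \<longleftrightarrow> (\<forall>v::real^'k. l1norm (A *v v) \<le> c * l1norm v)"

definition zero_sum_contraction :: "real^'k::finite^'k \<Rightarrow> real \<Rightarrow> bool" where
  "zero_sum_contraction A c \<longleftrightarrow>
     (\<forall>v::real^'k. (\<Sum>i\<in>UNIV. v $ i) = 0 \<longrightarrow> l1norm (A *v v) \<le> c * l1norm v)"

lemma l1_bounded_opnorm1: "opnorm1 A \<le> c \<Longrightarrow> l1_bounded A c"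
  unfolding l1_bounded_def
  by (meson l1norm_matrix_vector_le l1norm_nonneg mult_right_mono order_trans)

lemma l1_bounded_diff_mult:
  assumes A: "column_stochastic A" and B': "column_stochastic B'" and a: "0 \<le> a"
    and AA': "l1_bounded (A - A') a" and BB': "l1_bounded (B - B') b"
  shows "l1_bounded (A ** B - A' ** B') (a + b)"
  unfolding l1_bounded_def
proof
  fix v :: "real^'a"
  have split: "(A ** B - A' ** B') *v v = A *v ((B - B') *v v) + (A - A') *v (B' *v v)"
    by (simp add: matrix_vector_mult_diff_rdistrib matrix_vector_mult_diff_distrib
        matrix_vector_mul_assoc[symmetric])
  have "l1norm (A *v ((B - B') *v v)) \<le> b * l1norm v"
    using column_stochastic_l1norm_le[OF A, of "(B - B') *v v"] BB'
    unfolding l1_bounded_def by (meson order_trans)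
  moreover have "l1norm ((A - A') *v (B' *v v)) \<le> a * l1norm v"
    using AA' column_stochastic_l1norm_le[OF B', of v] a unfolding l1_bounded_def
    by (meson mult_left_mono order_trans)
  ultimately show "l1norm ((A ** B - A' ** B') *v v) \<le> (a + b) * l1norm v"
    unfolding split using l1norm_add_le[of "A *v ((B - B') *v v)" "(A - A') *v (B' *v v)"]
    by (simp add: distrib_right)
qed

lemma zero_sum_contraction_mono:
  "zero_sum_contraction A b \<Longrightarrow> b \<le> b' \<Longrightarrow> zero_sum_contraction A b'"
  unfolding zero_sum_contraction_def
  by (meson l1norm_nonneg mult_right_mono order_trans)

lemma zero_sum_contraction_stochastic: "column_stochastic A \<Longrightarrow> zero_sum_contraction A 1"
  unfolding zero_sum_contraction_def by (simp add: column_stochastic_l1norm_le)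

lemma zero_sum_contraction_mult:
  fixes A B :: "real^'n::finite^'n"
  assumes B: "column_stochastic B" and a: "zero_sum_contraction A a" and b: "zero_sum_contraction B b"
    and "0 \<le> a"
  shows "zero_sum_contraction (A ** B) (a * b)"
  unfolding zero_sum_contraction_def
proof (intro allI impI)
  fix v :: "real^'n" assume v: "(\<Sum>i\<in>UNIV. v $ i) = 0"
  have "l1norm (A *v (B *v v)) \<le> a * l1norm (B *v v)"
    using a column_stochastic_sum[OF B, of v] v unfolding zero_sum_contraction_def by simp
  also have "\<dots> \<le> a * (b * l1norm v)"
    using b v \<open>0 \<le> a\<close> unfolding zero_sum_contraction_def by (simp add: mult_left_mono)
  finally show "l1norm ((A ** B) *v v) \<le> a * b * l1norm v"
    by (simp add: matrix_vector_mul_assoc mult.assoc)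
qed

lemma zero_sum_contraction_simplex_dist:
  assumes "zero_sum_contraction A (e/4)" "q \<in> simplex1" "q' \<in> simplex1" "e > 0"
  shows "l1norm (A *v q - A *v q') < e"
proof -
  have "l1norm (A *v (q - q')) \<le> e/4 * l1norm (q - q')"
    using assms sum_simplex_diff unfolding zero_sum_contraction_def by blast
  also have "\<dots> \<le> e/4 * 2" using l1norm_simplex_diff_le[OF assms(2,3)] assms(4) by simp
  finally show ?thesis using assms(4) by (simp add: matrix_vector_mult_diff_distrib)
qed

lemma eventually_zero_sum_contraction:
  fixes Q :: "nat \<Rightarrow> real^'k::finite^'k" and L :: nat
  assumes base: "\<And>n. zero_sum_contraction (Q n) 1"
    and halving: "\<And>m. \<exists>t\<ge>m. \<forall>n\<ge>t+L. \<forall>b\<ge>0.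
        zero_sum_contraction (Q t) b \<longrightarrow> zero_sum_contraction (Q n) (b/2)"
    and "e > 0"
  shows "\<exists>N. \<forall>n\<ge>N. zero_sum_contraction (Q n) e"
proof -
  have "\<exists>N. \<forall>n\<ge>N. zero_sum_contraction (Q n) ((1/2)^j)" for j
  proof (induction j)
    case 0 then show ?case using base by auto
  next
    case (Suc j)
    then obtain N where N: "\<And>n. n \<ge> N \<Longrightarrow> zero_sum_contraction (Q n) ((1/2)^j)" by blast
    obtain t where "t \<ge> N" and
      t: "\<forall>n\<ge>t+L. \<forall>b\<ge>0. zero_sum_contraction (Q t) b \<longrightarrow> zero_sum_contraction (Q n) (b/2)"
      using halving[of N] by blast
    have "zero_sum_contraction (Q n) ((1/2)^Suc j)" if "n \<ge> t + L" for n
      using t N[OF \<open>t \<ge> N\<close>] that by simp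
    then show ?case by blast
  qed
  moreover obtain j where "(1/2::real)^j < e" using real_arch_pow_inv[OF \<open>e > 0\<close>, of "1/2"] by auto
  ultimately show ?thesis using zero_sum_contraction_mono[of _ "(1/2)^j" e] by (meson less_imp_le)
qed

lemma forward_attraction:
  fixes Q :: "nat \<Rightarrow> real^'k::finite^'k"
  assumes contr: "\<And>e. e > 0 \<Longrightarrow> \<exists>N. \<forall>n\<ge>N. zero_sum_contraction (Q n) e"
    and inv: "\<And>n. Q n *v p = p' n" and p: "p \<in> simplex1" and q: "q \<in> simplex1"
  shows "(\<lambda>n. l1norm (Q n *v q - p' n)) \<longlonglongrightarrow> 0"
proof (rule LIMSEQ_l1norm_zeroI)
  fix e :: real assume "e > 0"
  then obtain N where N: "\<forall>n\<ge>N. zero_sum_contraction (Q n) (e/4)" using contr[of "e/4"] by auto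
  have "l1norm (Q n *v q - p' n) < e" if "n \<ge> N" for n
    using zero_sum_contraction_simplex_dist[OF _ q p \<open>e > 0\<close>, of "Q n"] inv[of n] N that by simp
  then show "\<exists>N. \<forall>n\<ge>N. l1norm (Q n *v q - p' n) < e" by blast
qed

lemma pullback_Cauchy:
  fixes Q :: "nat \<Rightarrow> real^'k::finite^'k"
  assumes split: "\<And>n m. \<exists>R. column_stochastic R \<and> Q (n + m) = Q n ** R"
    and contr: "\<And>e. e > 0 \<Longrightarrow> \<exists>N. \<forall>n\<ge>N. zero_sum_contraction (Q n) e"
    and q: "q \<in> simplex1"
  shows "Cauchy (\<lambda>n. Q n *v q)"
proof (rule CauchyI)
  fix e :: real assume "e > 0"
  have step: "l1norm (Q b *v q - Q a *v q) < e" if "zero_sum_contraction (Q a) (e/4)" "a \<le> b" for a b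
  proof -
    obtain R where R: "column_stochastic R" "Q (a + (b - a)) = Q a ** R" using split by blast
    have "Q b *v q = Q a *v (R *v q)" using R \<open>a \<le> b\<close> by (simp add: matrix_vector_mul_assoc)
    moreover have "R *v q \<in> simplex1" using R(1) q by (rule column_stochastic_simplex)
    ultimately show ?thesis
      using zero_sum_contraction_simplex_dist[OF that(1) _ q \<open>e > 0\<close>] by simp
  qed
  obtain N where N: "\<forall>n\<ge>N. zero_sum_contraction (Q n) (e/4)" using contr[of "e/4"] \<open>e > 0\<close> by auto
  have "norm (Q m *v q - Q n *v q) < e" if "m \<ge> N" "n \<ge> N" for m n
  proof (cases "n \<le> m")
    case True
    then have "l1norm (Q m *v q - Q n *v q) < e" using step[of n m] N that by auto
    then show ?thesis using norm_le_l1norm[of "Q m *v q - Q n *v q"] by linarith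
  next
    case False
    then have "l1norm (Q n *v q - Q m *v q) < e" using step[of m n] N that by auto
    then show ?thesis
      using norm_le_l1norm[of "Q n *v q - Q m *v q"] by (simp add: norm_minus_commute)
  qed
  then show "\<exists>M. \<forall>m\<ge>M. \<forall>n\<ge>M. norm (Q m *v q - Q n *v q) < e" by blast
qed

lemma pullback_limit_exists:
  fixes Q :: "nat \<Rightarrow> real^'k::finite^'k"
  assumes stoch: "\<And>n. column_stochastic (Q n)"
    and split: "\<And>n m. \<exists>R. column_stochastic R \<and> Q (n + m) = Q n ** R"
    and contr: "\<And>e. e > 0 \<Longrightarrow> \<exists>N. \<forall>n\<ge>N. zero_sum_contraction (Q n) e"
  shows "\<exists>p\<in>simplex1. \<forall>q\<in>simplex1. (\<lambda>n. l1norm (Q n *v q - p)) \<longlonglongrightarrow> 0"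
proof -
  define e0 :: "real^'k" where "e0 = axis undefined 1"
  have e0: "e0 \<in> simplex1" unfolding e0_def by (rule axis_in_simplex)
  obtain p where p: "(\<lambda>n. Q n *v e0) \<longlonglongrightarrow> p"
    using pullback_Cauchy[OF split contr e0] unfolding Cauchy_convergent_iff convergent_def by blast
  have "(\<lambda>n. l1norm (Q n *v q - p)) \<longlonglongrightarrow> 0" if q: "q \<in> simplex1" for q
  proof -
    have a: "(\<lambda>n. l1norm (Q n *v q - Q n *v e0)) \<longlonglongrightarrow> 0"
      by (rule forward_attraction[OF contr refl e0 q])
    have b: "(\<lambda>n. l1norm (Q n *v e0 - p)) \<longlonglongrightarrow> 0"
      using tendsto_l1norm_iff[of "\<lambda>n. Q n *v e0" p] p by simp
    have "(\<lambda>n. l1norm (Q n *v q - Q n *v e0) + l1norm (Q n *v e0 - p)) \<longlonglongrightarrow> 0"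
      using tendsto_add[OF a b] by simp
    moreover have "\<forall>\<^sub>F n in sequentially.
        norm (l1norm (Q n *v q - p)) \<le> l1norm (Q n *v q - Q n *v e0) + l1norm (Q n *v e0 - p)"
      by (intro always_eventually allI) (simp add: abs_of_nonneg[OF l1norm_nonneg] l1norm_triangle_diff)
    ultimately show ?thesis by (rule Lim_null_comparison[rotated])
  qed
  moreover have "p \<in> simplex1" using column_stochastic_simplex[OF stoch e0] p by (rule simplex_limit)
  ultimately show ?thesis by blast
qed

section \<open>Measure preserving and ergodic maps\<close>

definition ergodic_map :: "'a measure \<Rightarrow> ('a \<Rightarrow> 'a) \<Rightarrow> bool" where
  "ergodic_map M f \<longleftrightarrow>
     (\<forall>A\<in>sets M. f -` A \<inter> space M = A \<longrightarrow> measure M A = 0 \<or> measure M A = 1)"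

lemma AE_comp_measure_preserving:
  assumes f: "f \<in> M \<rightarrow>\<^sub>M M" and d: "distr M M f = M" and ae: "AE x in M. P x"
  shows "AE x in M. P (f x)"
proof -
  from ae obtain N where N: "{x\<in>space M. \<not> P x} \<subseteq> N" "emeasure M N = 0" "N \<in> sets M"
    by (rule AE_E)
  have "emeasure M (f -` N \<inter> space M) = emeasure (distr M M f) N"
    using emeasure_distr[OF f N(3)] by simp
  then have "f -` N \<inter> space M \<in> null_sets M"
    using d N(2,3) measurable_sets[OF f N(3)] by (simp add: null_setsI)
  moreover have "{x\<in>space M. \<not> P (f x)} \<subseteq> f -` N \<inter> space M"
    using N(1) measurable_space[OF f] by blast
  ultimately show ?thesis by (rule AE_I')
qed

lemma funpow_measure_preserving:
  assumes f: "f \<in> M \<rightarrow>\<^sub>M M" and d: "distr M M f = M"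
  shows "(f ^^ n) \<in> M \<rightarrow>\<^sub>M M \<and> distr M M (f ^^ n) = M"
proof (induction n)
  case (Suc n)
  then have m: "(f ^^ n) \<in> M \<rightarrow>\<^sub>M M" and dn: "distr M M (f ^^ n) = M" by auto
  have "f \<circ> (f ^^ n) \<in> M \<rightarrow>\<^sub>M M" using m f by (rule measurable_comp)
  moreover have "distr M M (f \<circ> (f ^^ n)) = M" using distr_distr[OF f m] dn d by simp
  ultimately show ?case by (simp only: funpow.simps(2))
qed (simp add: distr_id)

lemma AE_funpow_measure_preserving:
  assumes f: "f \<in> M \<rightarrow>\<^sub>M M" and d: "distr M M f = M" and ae: "AE x in M. P x"
  shows "AE x in M. \<forall>n. P ((f ^^ n) x)"
  unfolding AE_all_countable
  using AE_comp_measure_preserving[OF _ _ ae] funpow_measure_preserving[OF f d] by blast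

lemma distr_inv_into_measure_preserving:
  assumes b: "bij_betw \<theta> (space M) (space M)" and t: "\<theta> \<in> M \<rightarrow>\<^sub>M M"
    and s: "inv_into (space M) \<theta> \<in> M \<rightarrow>\<^sub>M M" and d: "distr M M \<theta> = M"
  shows "distr M M (inv_into (space M) \<theta>) = M"
proof (rule measure_eqI)
  fix A assume "A \<in> sets (distr M M (inv_into (space M) \<theta>))"
  then have A: "A \<in> sets M" by simp
  then have Asub: "A \<subseteq> space M" by (rule sets.sets_into_space)
  have inj: "inj_on \<theta> (space M)" using b by (rule bij_betw_imp_inj_on)
  have eq: "inv_into (space M) \<theta> -` A \<inter> space M = \<theta> ` A"
  proof
    show "inv_into (space M) \<theta> -` A \<inter> space M \<subseteq> \<theta> ` A"
      using bij_betw_inv_into_right[OF b] by (auto intro: image_eqI[rotated])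
    show "\<theta> ` A \<subseteq> inv_into (space M) \<theta> -` A \<inter> space M"
      using Asub inv_into_f_f[OF inj] bij_betw_imp_surj_on[OF b] by auto
  qed
  have tA: "\<theta> ` A \<in> sets M" using measurable_sets[OF s A] eq by simp
  have pre: "\<theta> -` (\<theta> ` A) \<inter> space M = A" using inj Asub by (auto simp: inj_on_def)
  have "emeasure (distr M M (inv_into (space M) \<theta>)) A = emeasure M (\<theta> ` A)"
    using emeasure_distr[OF s A] eq by simp
  also have "\<dots> = emeasure (distr M M \<theta>) (\<theta> ` A)" using d by simp
  also have "\<dots> = emeasure M A" using emeasure_distr[OF t tA] pre by simp
  finally show "emeasure (distr M M (inv_into (space M) \<theta>)) A = emeasure M A" .
qed simp

lemma ergodic_map_inv_into:
  assumes b: "bij_betw \<theta> (space M) (space M)" and erg: "ergodic_map M \<theta>"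
  shows "ergodic_map M (inv_into (space M) \<theta>)"
  unfolding ergodic_map_def
proof (intro ballI impI)
  fix A assume A: "A \<in> sets M" and inv: "inv_into (space M) \<theta> -` A \<inter> space M = A"
  have inj: "inj_on \<theta> (space M)" using b by (rule bij_betw_imp_inj_on)
  have "\<theta> -` A \<inter> space M = A"
  proof (intro set_eqI iffI)
    fix x assume x: "x \<in> \<theta> -` A \<inter> space M"
    then have "\<theta> x \<in> inv_into (space M) \<theta> -` A \<inter> space M" using inv by simp
    then show "x \<in> A" using inv_into_f_f[OF inj] x by simp
  next
    fix x assume x: "x \<in> A"
    then have xs: "x \<in> space M" using sets.sets_into_space[OF A] by blast
    then have "\<theta> x \<in> space M" using b by (auto simp: bij_betw_def)
    moreover have "inv_into (space M) \<theta> (\<theta> x) \<in> A" using inv_into_f_f[OF inj xs] x by simp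
    ultimately show "x \<in> \<theta> -` A \<inter> space M" using inv xs by blast
  qed
  then show "measure M A = 0 \<or> measure M A = 1" using erg A unfolding ergodic_map_def by blast
qed

definition later_visits :: "'a measure \<Rightarrow> ('a \<Rightarrow> 'a) \<Rightarrow> 'a set \<Rightarrow> nat \<Rightarrow> 'a set" where
  "later_visits M f A m = (\<Union>t\<in>{m..}. (f ^^ t) -` A \<inter> space M)"

lemma later_visits_preimage:
  assumes "f \<in> M \<rightarrow>\<^sub>M M"
  shows "f -` later_visits M f A m \<inter> space M = later_visits M f A (Suc m)"
proof (intro set_eqI iffI)
  fix x assume "x \<in> f -` later_visits M f A m \<inter> space M"
  then show "x \<in> later_visits M f A (Suc m)"
    unfolding later_visits_def by (auto simp: funpow_swap1 intro!: bexI[of _ "Suc _"])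
next
  fix x assume "x \<in> later_visits M f A (Suc m)"
  then obtain t where t: "t \<ge> Suc m" "(f ^^ t) x \<in> A" "x \<in> space M"
    unfolding later_visits_def by auto
  then obtain s where s: "t = Suc s" "s \<ge> m" by (cases t) auto
  then have "(f ^^ s) (f x) \<in> A" using t by (simp add: funpow_swap1)
  then show "x \<in> f -` later_visits M f A m \<inter> space M"
    using s t measurable_space[OF assms] unfolding later_visits_def by auto
qed

lemma later_visits_antimono:
  assumes "m \<le> n"
  shows "later_visits M f A n \<subseteq> later_visits M f A m"
proof
  fix x assume "x \<in> later_visits M f A n"
  then obtain t where "t \<ge> n" "(f ^^ t) x \<in> A" "x \<in> space M" unfolding later_visits_def by auto
  then show "x \<in> later_visits M f A m"
    using assms unfolding later_visits_def by (auto intro!: bexI[of _ t])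
qed

lemma INT_later_visits_preimage:
  assumes "f \<in> M \<rightarrow>\<^sub>M M"
  shows "f -` (\<Inter>m. later_visits M f A m) \<inter> space M = (\<Inter>m. later_visits M f A m)"
proof -
  have "f -` (\<Inter>m. later_visits M f A m) \<inter> space M = (\<Inter>m. f -` later_visits M f A m \<inter> space M)"
    by auto
  also have "\<dots> = (\<Inter>m. later_visits M f A (Suc m))" using later_visits_preimage[OF assms] by simp
  also have "\<dots> = (\<Inter>m. later_visits M f A m)"
  proof (intro set_eqI iffI)
    fix x assume "x \<in> (\<Inter>m. later_visits M f A (Suc m))"
    moreover have "later_visits M f A (Suc m) \<subseteq> later_visits M f A m" for m
      by (rule later_visits_antimono) simp
    ultimately have "x \<in> later_visits M f A m" for m by blast
    then show "x \<in> (\<Inter>m. later_visits M f A m)" by blast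
  qed auto
  finally show ?thesis .
qed

text \<open>The sets of later visits decrease and all have the same measure, since they are preimages of
  each other under a measure preserving map.\<close>

lemma measure_INT_later_visits:
  assumes P: "prob_space M" and f: "f \<in> M \<rightarrow>\<^sub>M M" and d: "distr M M f = M" and A: "A \<in> sets M"
  shows "measure M A \<le> measure M (\<Inter>m. later_visits M f A m)"
proof -
  interpret prob_space M by (rule P)
  define U where "U = later_visits M f A"
  have Us: "U m \<in> sets M" for m
    unfolding U_def later_visits_def
    using measurable_sets[OF conjunct1[OF funpow_measure_preserving[OF f d]] A] by blast
  have "measure M (U (Suc m)) = measure M (U m)" for m
    using measure_distr[OF f Us, of m] d later_visits_preimage[OF f] by (simp add: U_def)
  then have same_measure: "measure M (U m) = measure M (U 0)" for m
    by (induction m) auto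
  have "U 0 - U m \<in> null_sets M" for m
  proof -
    have "measure M (U 0 - U m) = 0"
      using finite_measure_Diff[OF Us[of 0] Us[of m]] later_visits_antimono[of 0 m M f A]
        same_measure[of m]
      by (simp add: U_def)
    then show ?thesis using Us by (simp add: emeasure_eq_measure null_setsI)
  qed
  then have "(\<Union>m. U 0 - U m) \<in> null_sets M" by blast
  moreover have "U 0 - (\<Inter>m. U m) = (\<Union>m. U 0 - U m)" by blast
  ultimately have "measure M (U 0 - (\<Inter>m. U m)) = 0" using null_setsD1 by (metis measure_def enn2real_0)
  moreover have "measure M (U 0) \<le> measure M (\<Inter>m. U m) + measure M (U 0 - (\<Inter>m. U m))"
  proof -
    have "measure M (U 0) \<le> measure M ((\<Inter>m. U m) \<union> (U 0 - (\<Inter>m. U m)))"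
      using Us by (intro finite_measure_mono) auto
    also have "\<dots> \<le> measure M (\<Inter>m. U m) + measure M (U 0 - (\<Inter>m. U m))"
      using Us by (intro measure_Un_le) auto
    finally show ?thesis .
  qed
  moreover have "A \<subseteq> U 0"
    unfolding U_def later_visits_def using sets.sets_into_space[OF A] by (auto intro!: exI[of _ "0::nat"])
  then have "measure M A \<le> measure M (U 0)" using A Us by (intro finite_measure_mono) auto
  ultimately show ?thesis unfolding U_def by linarith
qed

lemma AE_infinitely_often_visits:
  assumes P: "prob_space M" and f: "f \<in> M \<rightarrow>\<^sub>M M" and d: "distr M M f = M"
    and erg: "ergodic_map M f" and A: "A \<in> sets M" and pos: "measure M A > 0"
  shows "AE x in M. \<forall>m. \<exists>t\<ge>m. (f ^^ t) x \<in> A"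
proof -
  interpret prob_space M by (rule P)
  define E where "E = (\<Inter>m. later_visits M f A m)"
  have E: "E \<in> sets M"
    unfolding E_def later_visits_def
    using measurable_sets[OF conjunct1[OF funpow_measure_preserving[OF f d]] A] by blast
  have "measure M E > 0"
    using measure_INT_later_visits[OF P f d A] pos unfolding E_def by linarith
  moreover have "f -` E \<inter> space M = E" unfolding E_def by (rule INT_later_visits_preimage[OF f])
  then have "measure M E = 0 \<or> measure M E = 1" using erg E unfolding ergodic_map_def by blast
  ultimately have "AE x in M. x \<in> E" using AE_in_set_eq_1[OF E] by simp
  then show ?thesis
  proof (rule AE_mp, intro AE_I2 impI allI)
    fix x m assume "x \<in> E"
    then have "x \<in> later_visits M f A m" unfolding E_def by blast
    then show "\<exists>t\<ge>m. (f ^^ t) x \<in> A" unfolding later_visits_def by blast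
  qed
qed

lemma sets_sublevel:
  "N \<in> M \<rightarrow>\<^sub>M count_space (UNIV :: nat set) \<Longrightarrow> {x\<in>space M. N x \<le> L} \<in> sets M"
  using measurable_sets[of N M _ "{..L}"] by (simp add: vimage_def Int_def conj_commute)

lemma sublevel_set_pos_measure:
  assumes "prob_space M" and N: "N \<in> M \<rightarrow>\<^sub>M count_space (UNIV :: nat set)"
  shows "\<exists>L. measure M {x\<in>space M. N x \<le> L} > 0"
proof (rule ccontr)
  interpret prob_space M by fact
  note s = sets_sublevel[OF N]
  assume none: "\<nexists>L. measure M {x\<in>space M. N x \<le> L} > 0"
  have "measure M {x\<in>space M. N x \<le> L} = 0" for L
  proof -
    have "\<not> measure M {x\<in>space M. N x \<le> L} > 0" using none by blast
    then show ?thesis using measure_nonneg[of M "{x\<in>space M. N x \<le> L}"] by linarith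
  qed
  then have "{x\<in>space M. N x \<le> L} \<in> null_sets M" for L
    using s by (simp add: emeasure_eq_measure null_setsI)
  then have "(\<Union>L. {x\<in>space M. N x \<le> L}) \<in> null_sets M" by blast
  moreover have "(\<Union>L. {x\<in>space M. N x \<le> L}) = space M" by auto
  ultimately show False using emeasure_space_1 by auto
qed

section \<open>Pull-back limits along typical orbits\<close>

locale mutually_inverse_on =
  fixes \<Omega> :: "'a set" and \<theta> \<sigma> :: "'a \<Rightarrow> 'a"
  assumes theta_in: "x \<in> \<Omega> \<Longrightarrow> \<theta> x \<in> \<Omega>" and sigma_in: "x \<in> \<Omega> \<Longrightarrow> \<sigma> x \<in> \<Omega>"
    and theta_sigma: "x \<in> \<Omega> \<Longrightarrow> \<theta> (\<sigma> x) = x" and sigma_theta: "x \<in> \<Omega> \<Longrightarrow> \<sigma> (\<theta> x) = x"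
begin

lemma sigma_funpow_in: "x \<in> \<Omega> \<Longrightarrow> (\<sigma> ^^ n) x \<in> \<Omega>"
  by (induction n) (auto intro: sigma_in)

lemma theta_funpow_in: "x \<in> \<Omega> \<Longrightarrow> (\<theta> ^^ n) x \<in> \<Omega>"
  by (induction n) (auto intro: theta_in)

lemma theta_funpow_sigma_funpow: "x \<in> \<Omega> \<Longrightarrow> (\<theta> ^^ a) ((\<sigma> ^^ (a + b)) x) = (\<sigma> ^^ b) x"
proof (induction a)
  case (Suc a)
  have "(\<theta> ^^ Suc a) ((\<sigma> ^^ (Suc a + b)) x) = (\<theta> ^^ a) (\<theta> (\<sigma> ((\<sigma> ^^ (a + b)) x)))"
    by (simp add: funpow_swap1)
  also have "\<dots> = (\<theta> ^^ a) ((\<sigma> ^^ (a + b)) x)"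
    using theta_sigma[OF sigma_funpow_in[OF Suc.prems]] by simp
  finally show ?case using Suc by simp
qed simp

lemma sigma_funpow_theta_funpow: "x \<in> \<Omega> \<Longrightarrow> (\<sigma> ^^ (a + b)) ((\<theta> ^^ a) x) = (\<sigma> ^^ b) x"
proof (induction a)
  case (Suc a)
  have "(\<sigma> ^^ (Suc a + b)) ((\<theta> ^^ Suc a) x) = (\<sigma> ^^ (a + b)) (\<sigma> (\<theta> ((\<theta> ^^ a) x)))"
    by (simp add: funpow_swap1)
  also have "\<dots> = (\<sigma> ^^ (a + b)) ((\<theta> ^^ a) x)"
    using sigma_theta[OF theta_funpow_in[OF Suc.prems]] by simp
  finally show ?case using Suc by simp
qed simp

end

text \<open>The properties that the hypotheses guarantee only almost everywhere, for a perturbation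
  \<open>X \<epsilon>\<close> of the deterministic cocycle \<open>X 0\<close> with synchronization time \<open>N\<close>.\<close>

definition typical_point ::
    "(real \<Rightarrow> nat \<Rightarrow> 'a \<Rightarrow> real^'k::finite^'k) \<Rightarrow> ('a \<Rightarrow> 'a) \<Rightarrow> ('a \<Rightarrow> nat) \<Rightarrow> real \<Rightarrow> 'a \<Rightarrow> bool" where
  "typical_point X \<theta> N \<epsilon> x \<longleftrightarrow>
     (\<forall>n. column_stochastic (X \<epsilon> n x)) \<and> X \<epsilon> 0 x = mat 1 \<and>
     (\<forall>m n. X \<epsilon> (m + n) x = X \<epsilon> m ((\<theta> ^^ n) x) ** X \<epsilon> n x) \<and>
     opnorm1 (X \<epsilon> 1 x - X 0 1 x) \<le> \<epsilon> \<and>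
     (\<forall>n. column_stochastic (X 0 n x)) \<and> X 0 0 x = mat 1 \<and>
     (\<forall>m n. X 0 (m + n) x = X 0 m ((\<theta> ^^ n) x) ** X 0 n x) \<and>
     (\<forall>n i j. X 0 n x $ i $ j \<in> {0, 1}) \<and>
     (\<forall>i j. \<forall>n\<ge>N x. drn_map (X 0) n x i = drn_map (X 0) n x j)"

lemma typical_point_stochastic: "typical_point X \<theta> N \<epsilon> x \<Longrightarrow> column_stochastic (X \<epsilon> n x)"
  unfolding typical_point_def by blast

lemma typical_point_cocycle:
  "typical_point X \<theta> N \<epsilon> x \<Longrightarrow> X \<epsilon> (m + n) x = X \<epsilon> m ((\<theta> ^^ n) x) ** X \<epsilon> n x"
  unfolding typical_point_def by blast

lemma typical_point_synchronized:
  "typical_point X \<theta> N \<epsilon> x \<Longrightarrow> N x \<le> n \<Longrightarrow> \<forall>i j. drn_map (X 0) n x i = drn_map (X 0) n x j"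
  unfolding typical_point_def by blast

lemma typical_point_perturbation_bound:
  assumes "\<And>k. k \<le> n \<Longrightarrow> typical_point X \<theta> N \<epsilon> ((\<theta> ^^ k) x)" and "0 \<le> \<epsilon>"
  shows "l1_bounded (X \<epsilon> n x - X 0 n x) (real n * \<epsilon>)"
  using assms(1)
proof (induction n)
  case 0
  then have x: "typical_point X \<theta> N \<epsilon> x" by (metis funpow_0 le_refl)
  then have "X \<epsilon> 0 x = mat 1" unfolding typical_point_def by blast
  moreover have "X 0 0 x = mat 1" using x unfolding typical_point_def by blast
  ultimately show ?case unfolding l1_bounded_def l1norm_def by simp
next
  case (Suc n)
  have x: "typical_point X \<theta> N \<epsilon> x" using Suc.prems[of 0] by simp
  have xn: "typical_point X \<theta> N \<epsilon> ((\<theta> ^^ n) x)" using Suc.prems[of n] by simp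
  have IH: "l1_bounded (X \<epsilon> n x - X 0 n x) (real n * \<epsilon>)" using Suc by simp
  have "X \<epsilon> (Suc n) x = X \<epsilon> 1 ((\<theta> ^^ n) x) ** X \<epsilon> n x"
    using x unfolding typical_point_def by (metis add.commute plus_1_eq_Suc)
  moreover have "X 0 (Suc n) x = X 0 1 ((\<theta> ^^ n) x) ** X 0 n x"
    using x unfolding typical_point_def by (metis add.commute plus_1_eq_Suc)
  moreover have "column_stochastic (X \<epsilon> 1 ((\<theta> ^^ n) x))"
    using xn by (rule typical_point_stochastic)
  moreover have "column_stochastic (X 0 n x)" using x unfolding typical_point_def by blast
  moreover have "l1_bounded (X \<epsilon> 1 ((\<theta> ^^ n) x) - X 0 1 ((\<theta> ^^ n) x)) \<epsilon>"
    using xn unfolding typical_point_def by (intro l1_bounded_opnorm1) blast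
  ultimately have "l1_bounded (X \<epsilon> (Suc n) x - X 0 (Suc n) x) (\<epsilon> + real n * \<epsilon>)"
    using l1_bounded_diff_mult[OF _ _ \<open>0 \<le> \<epsilon>\<close> _ IH] by simp
  then show ?case by (simp add: algebra_simps)
qed

lemma typical_point_constant_map:
  assumes x: "typical_point X \<theta> N \<epsilon> x" and sync: "\<forall>i j. drn_map (X 0) n x i = drn_map (X 0) n x j"
  shows "X 0 n x *v v = (\<Sum>j\<in>UNIV. v $ j) *\<^sub>R axis (drn_map (X 0) n x undefined) 1"
proof (rule zero_one_stochastic_constant_map)
  show "column_stochastic (X 0 n x)" using x unfolding typical_point_def by blast
  show "\<forall>i j. X 0 n x $ i $ j \<in> {0, 1}" using x unfolding typical_point_def by blast
  show "\<forall>j. (THE i. X 0 n x $ i $ j = 1) = drn_map (X 0) n x undefined"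
    using sync unfolding drn_map_def by blast
qed

lemma typical_point_near_axis:
  assumes pts: "\<And>k. k \<le> n \<Longrightarrow> typical_point X \<theta> N \<epsilon> ((\<theta> ^^ k) x)" and "0 \<le> \<epsilon>"
    and sync: "\<forall>i j. drn_map (X 0) n x i = drn_map (X 0) n x j" and q: "q \<in> simplex1"
  shows "l1norm (X \<epsilon> n x *v q - axis (drn_map (X 0) n x undefined) 1) \<le> real n * \<epsilon>"
proof -
  have x: "typical_point X \<theta> N \<epsilon> x" using pts[of 0] by simp
  have "X 0 n x *v q = axis (drn_map (X 0) n x undefined) 1"
    using typical_point_constant_map[OF x sync, of q] q by (simp add: simplex1_def)
  then have "X \<epsilon> n x *v q - axis (drn_map (X 0) n x undefined) 1 = (X \<epsilon> n x - X 0 n x) *v q"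
    by (simp add: matrix_vector_mult_diff_rdistrib)
  moreover have "l1norm ((X \<epsilon> n x - X 0 n x) *v q) \<le> real n * \<epsilon> * l1norm q"
    using typical_point_perturbation_bound[OF pts \<open>0 \<le> \<epsilon>\<close>] unfolding l1_bounded_def by blast
  ultimately show ?thesis using l1norm_simplex[OF q] by simp
qed

lemma typical_point_block_contraction:
  assumes pts: "\<And>k. k \<le> n \<Longrightarrow> typical_point X \<theta> N \<epsilon> ((\<theta> ^^ k) x)" and "0 \<le> \<epsilon>"
    and sync: "\<forall>i j. drn_map (X 0) n x i = drn_map (X 0) n x j" and small: "real n * \<epsilon> \<le> 1/2"
  shows "zero_sum_contraction (X \<epsilon> n x) (1/2)"
  unfolding zero_sum_contraction_def
proof (intro allI impI)
  fix v :: "real^'b" assume v: "(\<Sum>i\<in>UNIV. v $ i) = 0"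
  have x: "typical_point X \<theta> N \<epsilon> x" using pts[of 0] by simp
  have "X 0 n x *v v = 0" using typical_point_constant_map[OF x sync, of v] v by simp
  then have "X \<epsilon> n x *v v = (X \<epsilon> n x - X 0 n x) *v v"
    by (simp add: matrix_vector_mult_diff_rdistrib)
  moreover have "l1norm ((X \<epsilon> n x - X 0 n x) *v v) \<le> real n * \<epsilon> * l1norm v"
    using typical_point_perturbation_bound[OF pts \<open>0 \<le> \<epsilon>\<close>] unfolding l1_bounded_def by blast
  moreover have "real n * \<epsilon> * l1norm v \<le> 1/2 * l1norm v"
    using small l1norm_nonneg[of v] by (rule mult_right_mono)
  ultimately show "l1norm (X \<epsilon> n x *v v) \<le> 1/2 * l1norm v" by simp
qed

text \<open>The limit of the pull-back images of a fixed vertex; where it does not exist the junk value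
  is again that vertex, so that \<open>pullback_limit\<close> is a distribution everywhere.\<close>

definition pullback_limit ::
    "(real \<Rightarrow> nat \<Rightarrow> 'a \<Rightarrow> real^'k::finite^'k) \<Rightarrow> ('a \<Rightarrow> 'a) \<Rightarrow> real \<Rightarrow> 'a \<Rightarrow> real^'k" where
  "pullback_limit X \<sigma> \<epsilon> \<omega> =
     (if Cauchy (\<lambda>n. X \<epsilon> n ((\<sigma> ^^ n) \<omega>) *v axis undefined 1) \<and>
         lim (\<lambda>n. X \<epsilon> n ((\<sigma> ^^ n) \<omega>) *v axis undefined 1) \<in> simplex1
      then lim (\<lambda>n. X \<epsilon> n ((\<sigma> ^^ n) \<omega>) *v axis undefined 1) else axis undefined 1)"

lemma pullback_limit_eqI:
  assumes "(\<lambda>n. X \<epsilon> n ((\<sigma> ^^ n) \<omega>) *v axis undefined 1) \<longlonglongrightarrow> p" "p \<in> simplex1"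
  shows "pullback_limit X \<sigma> \<epsilon> \<omega> = p"
  using LIMSEQ_imp_Cauchy[OF assms(1)] limI[OF assms(1)] assms(2)
  unfolding pullback_limit_def by simp

lemma pullback_limit_simplex: "pullback_limit X \<sigma> \<epsilon> \<omega> \<in> simplex1"
  unfolding pullback_limit_def using axis_in_simplex by auto

lemma borel_measurable_matrix_vector_comp:
  fixes A :: "'a \<Rightarrow> real^'k::finite^'k"
  assumes A: "\<And>i j. (\<lambda>\<omega>. A \<omega> $ i $ j) \<in> borel_measurable M" and g: "g \<in> M \<rightarrow>\<^sub>M M"
  shows "(\<lambda>\<omega>. A (g \<omega>) *v v) \<in> borel_measurable M"
proof (rule borel_measurable_vec_cart)
  fix i
  have "(\<lambda>\<omega>. A (g \<omega>) $ i $ j) \<in> borel_measurable M" for j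
    using measurable_compose[OF g A[of i j]] by simp
  then have "(\<lambda>\<omega>. \<Sum>j\<in>UNIV. A (g \<omega>) $ i $ j * v $ j) \<in> borel_measurable M"
    by (intro borel_measurable_sum borel_measurable_times borel_measurable_const) auto
  then show "(\<lambda>\<omega>. (A (g \<omega>) *v v) $ i) \<in> borel_measurable M"
    by (simp add: matrix_vector_mult_def)
qed

lemma pullback_limit_measurable:
  assumes X: "\<And>n i j. (\<lambda>\<omega>. X \<epsilon> n \<omega> $ i $ j) \<in> borel_measurable M"
    and \<sigma>: "\<sigma> \<in> M \<rightarrow>\<^sub>M M" "distr M M \<sigma> = M"
  shows "pullback_limit X \<sigma> \<epsilon> \<in> borel_measurable M"
proof -
  define f where "f n \<omega> = X \<epsilon> n ((\<sigma> ^^ n) \<omega>) *v axis undefined 1" for n \<omega>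
  have f: "f n \<in> borel_measurable M" for n
    unfolding f_def using funpow_measure_preserving[OF \<sigma>]
    by (blast intro: borel_measurable_matrix_vector_comp[OF X])
  have lim: "(\<lambda>\<omega>. lim (\<lambda>n. f n \<omega>)) \<in> borel_measurable M" by (rule borel_measurable_lim_metric[OF f])
  have "{\<omega>\<in>space M. Cauchy (\<lambda>n. f n \<omega>)} \<in> sets M" by (rule sets_Collect_Cauchy[OF f])
  then have "{\<omega>\<in>space M. Cauchy (\<lambda>n. f n \<omega>)} \<inter> ((\<lambda>\<omega>. lim (\<lambda>n. f n \<omega>)) -` simplex1 \<inter> space M)
      \<in> sets M"
    using measurable_sets[OF lim borel_closed[OF closed_simplex1]] by blast
  moreover have "{\<omega>\<in>space M. Cauchy (\<lambda>n. f n \<omega>) \<and> lim (\<lambda>n. f n \<omega>) \<in> simplex1} =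
      {\<omega>\<in>space M. Cauchy (\<lambda>n. f n \<omega>)} \<inter> ((\<lambda>\<omega>. lim (\<lambda>n. f n \<omega>)) -` simplex1 \<inter> space M)"
    by blast
  ultimately have "{\<omega>\<in>space M. Cauchy (\<lambda>n. f n \<omega>) \<and> lim (\<lambda>n. f n \<omega>) \<in> simplex1} \<in> sets M"
    by simp
  then show ?thesis
    unfolding pullback_limit_def f_def[symmetric] by (rule measurable_If[OF lim borel_measurable_const])
qed

definition typical_orbit :: "'a set \<Rightarrow> ('a \<Rightarrow> 'a) \<Rightarrow> ('a \<Rightarrow> 'a) \<Rightarrow>
    (real \<Rightarrow> nat \<Rightarrow> 'a \<Rightarrow> real^'k::finite^'k) \<Rightarrow> ('a \<Rightarrow> nat) \<Rightarrow> real \<Rightarrow> nat \<Rightarrow> 'a \<Rightarrow> bool" where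
  "typical_orbit \<Omega> \<theta> \<sigma> X N \<epsilon> L \<omega> \<longleftrightarrow> \<omega> \<in> \<Omega> \<and>
     (\<forall>n. typical_point X \<theta> N \<epsilon> ((\<theta> ^^ n) \<omega>) \<and> typical_point X \<theta> N \<epsilon> ((\<sigma> ^^ n) \<omega>)) \<and>
     (\<forall>m. \<exists>t\<ge>m. N ((\<theta> ^^ t) \<omega>) \<le> L) \<and> (\<forall>m. \<exists>t\<ge>m. N ((\<sigma> ^^ t) \<omega>) \<le> L)"

locale small_perturbation = mutually_inverse_on \<Omega> \<theta> \<sigma> for \<Omega> :: "'a set" and \<theta> \<sigma> +
  fixes X :: "real \<Rightarrow> nat \<Rightarrow> 'a \<Rightarrow> real^'k::finite^'k" and N :: "'a \<Rightarrow> nat"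
    and \<epsilon> :: real and L :: nat
  assumes eps_nonneg: "0 \<le> \<epsilon>" and eps_small: "real L * \<epsilon> \<le> 1/2"
begin

abbreviation typical :: "'a \<Rightarrow> bool" where
  "typical \<equiv> typical_orbit \<Omega> \<theta> \<sigma> X N \<epsilon> L"

lemma typical_theta_sigma:
  assumes "typical \<omega>"
  shows "typical_point X \<theta> N \<epsilon> ((\<theta> ^^ k) ((\<sigma> ^^ n) \<omega>))"
proof (cases "k \<le> n")
  case True
  then have "(\<theta> ^^ k) ((\<sigma> ^^ n) \<omega>) = (\<sigma> ^^ (n - k)) \<omega>"
    using theta_funpow_sigma_funpow[of \<omega> k "n - k"] assms unfolding typical_orbit_def by simp
  then show ?thesis using assms unfolding typical_orbit_def by simp
next
  case False
  then have "(\<theta> ^^ k) ((\<sigma> ^^ n) \<omega>) = (\<theta> ^^ (k - n)) ((\<theta> ^^ n) ((\<sigma> ^^ n) \<omega>))"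
    by (metis funpow_add comp_apply le_add_diff_inverse2 nat_le_linear)
  also have "(\<theta> ^^ n) ((\<sigma> ^^ n) \<omega>) = \<omega>"
    using theta_funpow_sigma_funpow[of \<omega> n 0] assms unfolding typical_orbit_def by simp
  finally show ?thesis using assms unfolding typical_orbit_def by simp
qed

lemma typical_theta:
  assumes "typical \<omega>"
  shows "typical_point X \<theta> N \<epsilon> ((\<theta> ^^ k) ((\<theta> ^^ n) \<omega>))"
proof -
  have "(\<theta> ^^ k) ((\<theta> ^^ n) \<omega>) = (\<theta> ^^ (k + n)) \<omega>" by (simp add: funpow_add)
  then show ?thesis using assms unfolding typical_orbit_def by simp
qed

lemma typical_block_contraction:
  assumes "typical \<omega>" and "x = (\<theta> ^^ t) \<omega> \<or> x = (\<sigma> ^^ t) \<omega>" and "N x \<le> L"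
  shows "zero_sum_contraction (X \<epsilon> L x) (1/2)"
proof -
  have x: "typical_point X \<theta> N \<epsilon> ((\<theta> ^^ k) x)" for k
    using assms(2) typical_theta[OF assms(1), of k t] typical_theta_sigma[OF assms(1), of k t] by auto
  moreover have "\<forall>i j. drn_map (X 0) L x i = drn_map (X 0) L x j"
    using typical_point_synchronized[OF x[of 0, simplified] assms(3)] .
  ultimately show ?thesis by (rule typical_point_block_contraction[OF _ eps_nonneg _ eps_small])
qed

text \<open>Whenever the orbit visits \<open>{N \<le> L}\<close>, the next \<open>L\<close> steps halve the contraction coefficient.\<close>

lemma forward_contraction:
  assumes orbit: "typical \<omega>" and "e > 0"
  shows "\<exists>M. \<forall>n\<ge>M. zero_sum_contraction (X \<epsilon> n \<omega>) e"
proof (rule eventually_zero_sum_contraction[OF _ _ \<open>e > 0\<close>])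
  have \<omega>: "typical_point X \<theta> N \<epsilon> \<omega>" using typical_theta[OF orbit, of 0 0] by simp
  then show "zero_sum_contraction (X \<epsilon> n \<omega>) 1" for n
    by (intro zero_sum_contraction_stochastic typical_point_stochastic)
  fix m
  obtain t where "t \<ge> m" and t: "N ((\<theta> ^^ t) \<omega>) \<le> L" using orbit unfolding typical_orbit_def by blast
  define x where "x = (\<theta> ^^ t) \<omega>"
  have x: "typical_point X \<theta> N \<epsilon> ((\<theta> ^^ k) x)" for k
    unfolding x_def by (rule typical_theta[OF orbit])
  have block: "zero_sum_contraction (X \<epsilon> L x) (1/2)"
    using typical_block_contraction[OF orbit _ t] unfolding x_def by blast
  have "zero_sum_contraction (X \<epsilon> n \<omega>) (b/2)"
    if "n \<ge> t + L" "0 \<le> b" "zero_sum_contraction (X \<epsilon> t \<omega>) b" for n b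
  proof -
    have "X \<epsilon> n \<omega> = (X \<epsilon> (n - t - L) ((\<theta> ^^ L) x) ** X \<epsilon> L x) ** X \<epsilon> t \<omega>"
      using typical_point_cocycle[OF \<omega>, of "n - t" t] typical_point_cocycle[OF x[of 0], of "n - t - L" L]
        \<open>n \<ge> t + L\<close> unfolding x_def by simp
    moreover have "zero_sum_contraction (X \<epsilon> (n - t - L) ((\<theta> ^^ L) x) ** X \<epsilon> L x) (1 * (1/2))"
      using zero_sum_contraction_mult[OF typical_point_stochastic[OF x[of 0, simplified]]
          zero_sum_contraction_stochastic[OF typical_point_stochastic[OF x[of L]]] block]
      by simp
    then have "zero_sum_contraction ((X \<epsilon> (n - t - L) ((\<theta> ^^ L) x) ** X \<epsilon> L x) ** X \<epsilon> t \<omega>)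
        (1 * (1/2) * b)"
      by (rule zero_sum_contraction_mult[OF typical_point_stochastic[OF \<omega>] _ that(3)]) simp
    ultimately show ?thesis by simp
  qed
  then show "\<exists>t\<ge>m. \<forall>n\<ge>t+L. \<forall>b\<ge>0. zero_sum_contraction (X \<epsilon> t \<omega>) b \<longrightarrow>
      zero_sum_contraction (X \<epsilon> n \<omega>) (b/2)"
    using \<open>t \<ge> m\<close> by blast
qed

lemma pullback_split:
  assumes "typical \<omega>"
  shows "\<exists>R. column_stochastic R \<and> X \<epsilon> (n + m) ((\<sigma> ^^ (n + m)) \<omega>) = X \<epsilon> n ((\<sigma> ^^ n) \<omega>) ** R"
proof -
  define y where "y = (\<sigma> ^^ (n + m)) \<omega>"
  have y: "typical_point X \<theta> N \<epsilon> y" unfolding y_def using typical_theta_sigma[OF assms, of 0] by simp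
  have "(\<theta> ^^ m) y = (\<sigma> ^^ n) \<omega>"
    unfolding y_def using theta_funpow_sigma_funpow[of \<omega> m n] assms
    unfolding typical_orbit_def by (simp add: add.commute)
  then show ?thesis using typical_point_cocycle[OF y, of n m] typical_point_stochastic[OF y]
    unfolding y_def by auto
qed

lemma pullback_contraction:
  assumes orbit: "typical \<omega>" and "e > 0"
  shows "\<exists>M. \<forall>n\<ge>M. zero_sum_contraction (X \<epsilon> n ((\<sigma> ^^ n) \<omega>)) e"
proof (rule eventually_zero_sum_contraction[OF _ _ \<open>e > 0\<close>])
  show "zero_sum_contraction (X \<epsilon> n ((\<sigma> ^^ n) \<omega>)) 1" for n
    using typical_theta_sigma[OF orbit, of 0 n]
    by (intro zero_sum_contraction_stochastic typical_point_stochastic) simp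
  fix m
  obtain s where "s \<ge> m + L" and s: "N ((\<sigma> ^^ s) \<omega>) \<le> L"
    using orbit unfolding typical_orbit_def by blast
  define t where "t = s - L"
  define x where "x = (\<sigma> ^^ s) \<omega>"
  have x: "typical_point X \<theta> N \<epsilon> x" using typical_theta_sigma[OF orbit, of 0 s] unfolding x_def by simp
  have block: "zero_sum_contraction (X \<epsilon> L x) (1/2)"
    using typical_block_contraction[OF orbit _ s] unfolding x_def by blast
  have "(\<theta> ^^ L) x = (\<sigma> ^^ t) \<omega>"
    using theta_funpow_sigma_funpow[of \<omega> L t] orbit \<open>s \<ge> m + L\<close>
    unfolding x_def t_def typical_orbit_def by simp
  then have s_split: "X \<epsilon> s x = X \<epsilon> t ((\<sigma> ^^ t) \<omega>) ** X \<epsilon> L x"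
    using typical_point_cocycle[OF x, of t L] \<open>s \<ge> m + L\<close> unfolding t_def by simp
  have "zero_sum_contraction (X \<epsilon> n ((\<sigma> ^^ n) \<omega>)) (b/2)"
    if "n \<ge> t + L" "0 \<le> b" "zero_sum_contraction (X \<epsilon> t ((\<sigma> ^^ t) \<omega>)) b" for n b
  proof -
    obtain R where R: "column_stochastic R"
      "X \<epsilon> (s + (n - s)) ((\<sigma> ^^ (s + (n - s))) \<omega>) = X \<epsilon> s ((\<sigma> ^^ s) \<omega>) ** R"
      using pullback_split[OF orbit, of s "n - s"] by blast
    then have "X \<epsilon> n ((\<sigma> ^^ n) \<omega>) = (X \<epsilon> t ((\<sigma> ^^ t) \<omega>) ** X \<epsilon> L x) ** R"
      using \<open>n \<ge> t + L\<close> \<open>s \<ge> m + L\<close> s_split unfolding x_def t_def by simp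
    moreover have "zero_sum_contraction (X \<epsilon> t ((\<sigma> ^^ t) \<omega>) ** X \<epsilon> L x) (b * (1/2))"
      by (rule zero_sum_contraction_mult[OF typical_point_stochastic[OF x] that(3) block that(2)])
    ultimately show ?thesis
      using zero_sum_contraction_mult[OF R(1) _ zero_sum_contraction_stochastic[OF R(1)]] that(2)
      by simp
  qed
  moreover have "t \<ge> m" using \<open>s \<ge> m + L\<close> unfolding t_def by simp
  ultimately show "\<exists>t\<ge>m. \<forall>n\<ge>t+L. \<forall>b\<ge>0. zero_sum_contraction (X \<epsilon> t ((\<sigma> ^^ t) \<omega>)) b \<longrightarrow>
      zero_sum_contraction (X \<epsilon> n ((\<sigma> ^^ n) \<omega>)) (b/2)"
    by blast
qed

lemma pullback_limit_attracts:
  assumes orbit: "typical \<omega>" and q: "q \<in> simplex1"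
  shows "(\<lambda>n. l1norm (X \<epsilon> n ((\<sigma> ^^ n) \<omega>) *v q - pullback_limit X \<sigma> \<epsilon> \<omega>)) \<longlonglongrightarrow> 0"
proof -
  obtain p where p: "p \<in> simplex1"
    "\<And>q. q \<in> simplex1 \<Longrightarrow> (\<lambda>n. l1norm (X \<epsilon> n ((\<sigma> ^^ n) \<omega>) *v q - p)) \<longlonglongrightarrow> 0"
  proof -
    have "\<exists>p\<in>simplex1. \<forall>q\<in>simplex1. (\<lambda>n. l1norm (X \<epsilon> n ((\<sigma> ^^ n) \<omega>) *v q - p)) \<longlonglongrightarrow> 0"
    proof (rule pullback_limit_exists)
      show "column_stochastic (X \<epsilon> n ((\<sigma> ^^ n) \<omega>))" for n
        using typical_theta_sigma[OF orbit, of 0 n] typical_point_stochastic by simp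
      show "\<exists>R. column_stochastic R \<and> X \<epsilon> (n + m) ((\<sigma> ^^ (n + m)) \<omega>) = X \<epsilon> n ((\<sigma> ^^ n) \<omega>) ** R"
        for n m by (rule pullback_split[OF orbit])
      show "\<exists>N. \<forall>n\<ge>N. zero_sum_contraction (X \<epsilon> n ((\<sigma> ^^ n) \<omega>)) e" if "e > 0" for e
        by (rule pullback_contraction[OF orbit that])
    qed
    then show ?thesis using that by blast
  qed
  then have "(\<lambda>n. X \<epsilon> n ((\<sigma> ^^ n) \<omega>) *v axis undefined 1) \<longlonglongrightarrow> p"
    using p(2)[OF axis_in_simplex]
      tendsto_l1norm_iff[of "\<lambda>n. X \<epsilon> n ((\<sigma> ^^ n) \<omega>) *v axis undefined 1" p] by simp
  then have "pullback_limit X \<sigma> \<epsilon> \<omega> = p" using p(1) by (rule pullback_limit_eqI)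
  then show ?thesis using p(2)[OF q] by simp
qed

lemma pullback_limit_invariant:
  assumes orbit: "typical \<omega>"
  shows "X \<epsilon> n \<omega> *v pullback_limit X \<sigma> \<epsilon> \<omega> = pullback_limit X \<sigma> \<epsilon> ((\<theta> ^^ n) \<omega>)"
proof -
  define e0 :: "real^'k" where "e0 = axis undefined 1"
  have \<omega>: "\<omega> \<in> \<Omega>" using orbit unfolding typical_orbit_def by blast
  have A: "column_stochastic (X \<epsilon> n \<omega>)"
    using typical_theta[OF orbit, of 0 0] by (simp add: typical_point_stochastic)
  have "(\<lambda>k. X \<epsilon> k ((\<sigma> ^^ k) \<omega>) *v e0) \<longlonglongrightarrow> pullback_limit X \<sigma> \<epsilon> \<omega>"
    using pullback_limit_attracts[OF orbit axis_in_simplex[of undefined]]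
      tendsto_l1norm_iff[of "\<lambda>k. X \<epsilon> k ((\<sigma> ^^ k) \<omega>) *v e0"] unfolding e0_def by simp
  then have "(\<lambda>k. X \<epsilon> n \<omega> *v (X \<epsilon> k ((\<sigma> ^^ k) \<omega>) *v e0)) \<longlonglongrightarrow> X \<epsilon> n \<omega> *v pullback_limit X \<sigma> \<epsilon> \<omega>"
    by (rule column_stochastic_tendsto[OF A])
  moreover have "X \<epsilon> (k + n) ((\<sigma> ^^ (k + n)) ((\<theta> ^^ n) \<omega>)) *v e0 =
      X \<epsilon> n \<omega> *v (X \<epsilon> k ((\<sigma> ^^ k) \<omega>) *v e0)" for k
  proof -
    have "(\<sigma> ^^ (k + n)) ((\<theta> ^^ n) \<omega>) = (\<sigma> ^^ k) \<omega>"
      using sigma_funpow_theta_funpow[OF \<omega>, of n k] by (simp add: add.commute)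
    moreover have "(\<theta> ^^ k) ((\<sigma> ^^ k) \<omega>) = \<omega>" using theta_funpow_sigma_funpow[OF \<omega>, of k 0] by simp
    ultimately show ?thesis
      using typical_point_cocycle[OF typical_theta_sigma[OF orbit, of 0 k, simplified], of n k]
      by (simp add: add.commute matrix_vector_mul_assoc)
  qed
  ultimately have "(\<lambda>k. X \<epsilon> k ((\<sigma> ^^ k) ((\<theta> ^^ n) \<omega>)) *v e0) \<longlonglongrightarrow>
      X \<epsilon> n \<omega> *v pullback_limit X \<sigma> \<epsilon> \<omega>"
    using LIMSEQ_offset[of "\<lambda>k. X \<epsilon> k ((\<sigma> ^^ k) ((\<theta> ^^ n) \<omega>)) *v e0" n] by simp
  then show ?thesis unfolding e0_def
    by (intro pullback_limit_eqI[symmetric] column_stochastic_simplex[OF A pullback_limit_simplex])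
qed

lemma pullback_limit_forward_attracts:
  assumes orbit: "typical \<omega>" and "q \<in> simplex1"
  shows "(\<lambda>n. l1norm (X \<epsilon> n \<omega> *v q - pullback_limit X \<sigma> \<epsilon> ((\<theta> ^^ n) \<omega>))) \<longlonglongrightarrow> 0"
  by (rule forward_attraction[OF forward_contraction[OF orbit] pullback_limit_invariant[OF orbit]
        pullback_limit_simplex \<open>q \<in> simplex1\<close>])

lemma pullback_limit_near_axis:
  assumes orbit: "typical \<omega>"
    and sync: "\<forall>i j. drn_map (X 0) n ((\<sigma> ^^ n) \<omega>) i = drn_map (X 0) n ((\<sigma> ^^ n) \<omega>) j"
  shows "l1norm (pullback_limit X \<sigma> \<epsilon> \<omega> - axis (drn_map (X 0) n ((\<sigma> ^^ n) \<omega>) undefined) 1)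
    \<le> real n * \<epsilon>"
proof (rule field_le_epsilon)
  fix d :: real assume "d > 0"
  define a where "a = (axis (drn_map (X 0) n ((\<sigma> ^^ n) \<omega>) undefined) 1 :: real^'k)"
  define e0 :: "real^'k" where "e0 = axis undefined 1"
  define p where "p = pullback_limit X \<sigma> \<epsilon> \<omega>"
  have "(\<lambda>m. l1norm (X \<epsilon> m ((\<sigma> ^^ m) \<omega>) *v e0 - p)) \<longlonglongrightarrow> 0"
    unfolding p_def e0_def by (rule pullback_limit_attracts[OF orbit axis_in_simplex])
  from order_tendstoD(2)[OF this \<open>d > 0\<close>] obtain M
    where M: "\<And>m. m \<ge> M \<Longrightarrow> l1norm (X \<epsilon> m ((\<sigma> ^^ m) \<omega>) *v e0 - p) < d"
    unfolding eventually_sequentially by blast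
  define m where "m = max M n"
  obtain R where R: "column_stochastic R"
    "X \<epsilon> (n + (m - n)) ((\<sigma> ^^ (n + (m - n))) \<omega>) = X \<epsilon> n ((\<sigma> ^^ n) \<omega>) ** R"
    using pullback_split[OF orbit, of n "m - n"] by blast
  have "l1norm (X \<epsilon> n ((\<sigma> ^^ n) \<omega>) *v (R *v e0) - a) \<le> real n * \<epsilon>"
    unfolding a_def e0_def using typical_theta_sigma[OF orbit] sync
    by (intro typical_point_near_axis eps_nonneg column_stochastic_simplex[OF R(1) axis_in_simplex])
  then have "l1norm (X \<epsilon> m ((\<sigma> ^^ m) \<omega>) *v e0 - a) \<le> real n * \<epsilon>"
    using R(2) unfolding m_def by (simp add: matrix_vector_mul_assoc)
  moreover have "l1norm (p - X \<epsilon> m ((\<sigma> ^^ m) \<omega>) *v e0) < d"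
    using M[of m] l1norm_minus_commute[of p] unfolding m_def by simp
  ultimately show "l1norm (pullback_limit X \<sigma> \<epsilon> \<omega> - a) \<le> real n * \<epsilon> + d"
    using l1norm_triangle_diff[of p a "X \<epsilon> m ((\<sigma> ^^ m) \<omega>) *v e0"] unfolding p_def by linarith
qed

end

section \<open>Invariant distributions of the perturbed network\<close>

locale synchronized_perturbation =
  fixes M :: "'a::polish_space measure" and \<theta> :: "'a \<Rightarrow> 'a"
    and X :: "real \<Rightarrow> nat \<Rightarrow> 'a \<Rightarrow> real^'k::finite^'k" and N :: "'a \<Rightarrow> nat" and L :: nat
  assumes mds: "invertible_ergodic_mds M \<theta>"
    and perturbation: "markov_perturbation M \<theta> X"
    and N_synchronizes: "AE \<omega> in M. \<forall>i j. \<forall>n\<ge>N \<omega>. drn_map (X 0) n \<omega> i = drn_map (X 0) n \<omega> j"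
    and sublevel_set: "{x\<in>space M. N x \<le> L} \<in> sets M"
    and sublevel_pos: "measure M {x\<in>space M. N x \<le> L} > 0"
begin

abbreviation \<sigma> :: "'a \<Rightarrow> 'a" where
  "\<sigma> \<equiv> inv_into (space M) \<theta>"

lemma prob_space_M: "prob_space M"
  using mds unfolding invertible_ergodic_mds_def standard_prob_space_def by blast

sublocale prob_space M by (rule prob_space_M)

lemma bij_theta: "bij_betw \<theta> (space M) (space M)"
  using mds unfolding invertible_ergodic_mds_def by blast

lemma theta_measurable: "\<theta> \<in> M \<rightarrow>\<^sub>M M" and distr_theta: "distr M M \<theta> = M"
  and sigma_measurable: "\<sigma> \<in> M \<rightarrow>\<^sub>M M" and ergodic_theta: "ergodic_map M \<theta>"
  using mds unfolding invertible_ergodic_mds_def ergodic_map_def by blast+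

lemma distr_sigma: "distr M M \<sigma> = M"
  by (rule distr_inv_into_measure_preserving[OF bij_theta theta_measurable sigma_measurable distr_theta])

lemma ergodic_sigma: "ergodic_map M \<sigma>"
  by (rule ergodic_map_inv_into[OF bij_theta ergodic_theta])

lemma mutually_inverse: "mutually_inverse_on (space M) \<theta> \<sigma>"
proof
  fix x assume x: "x \<in> space M"
  show "\<theta> x \<in> space M" using measurable_space[OF theta_measurable x] .
  show "\<sigma> x \<in> space M" using measurable_space[OF sigma_measurable x] .
  show "\<theta> (\<sigma> x) = x" using bij_betw_inv_into_right[OF bij_theta x] .
  show "\<sigma> (\<theta> x) = x" using inv_into_f_f[OF bij_betw_imp_inj_on[OF bij_theta] x] .
qed

lemma MRN_cocycle: "0 \<le> \<epsilon> \<Longrightarrow> MRN_cocycle M \<theta> (X \<epsilon>)"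
  using perturbation unfolding markov_perturbation_def by blast

lemma AE_typical_point:
  assumes "0 \<le> \<epsilon>"
  shows "AE x in M. typical_point X \<theta> N \<epsilon> x"
proof -
  from MRN_cocycle[OF assms] have
    "AE \<omega> in M. \<forall>n. column_stochastic (X \<epsilon> n \<omega>)" "AE \<omega> in M. X \<epsilon> 0 \<omega> = mat 1"
    "AE \<omega> in M. \<forall>m n. X \<epsilon> (m + n) \<omega> = X \<epsilon> m ((\<theta> ^^ n) \<omega>) ** X \<epsilon> n \<omega>"
    unfolding MRN_cocycle_def by auto
  moreover have "AE \<omega> in M. opnorm1 (X \<epsilon> 1 \<omega> - X 0 1 \<omega>) \<le> \<epsilon>"
    using perturbation assms unfolding markov_perturbation_def by blast
  moreover from perturbation have
    "AE \<omega> in M. \<forall>n. column_stochastic (X 0 n \<omega>)" "AE \<omega> in M. X 0 0 \<omega> = mat 1"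
    "AE \<omega> in M. \<forall>m n. X 0 (m + n) \<omega> = X 0 m ((\<theta> ^^ n) \<omega>) ** X 0 n \<omega>"
    "AE \<omega> in M. \<forall>n i j. X 0 n \<omega> $ i $ j \<in> {0, 1}"
    unfolding markov_perturbation_def DRN_cocycle_def MRN_cocycle_def by auto
  ultimately show ?thesis using N_synchronizes unfolding typical_point_def
    by eventually_elim (intro conjI)
qed

lemma AE_typical_orbit:
  assumes "0 \<le> \<epsilon>"
  shows "AE \<omega> in M. typical_orbit (space M) \<theta> \<sigma> X N \<epsilon> L \<omega>"
proof -
  have "AE \<omega> in M. \<forall>m. \<exists>t\<ge>m. (\<theta> ^^ t) \<omega> \<in> {x\<in>space M. N x \<le> L}"
    by (rule AE_infinitely_often_visits[OF prob_space_M theta_measurable distr_theta ergodic_theta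
          sublevel_set sublevel_pos])
  moreover have "AE \<omega> in M. \<forall>m. \<exists>t\<ge>m. (\<sigma> ^^ t) \<omega> \<in> {x\<in>space M. N x \<le> L}"
    by (rule AE_infinitely_often_visits[OF prob_space_M sigma_measurable distr_sigma ergodic_sigma
          sublevel_set sublevel_pos])
  moreover have "AE \<omega> in M. \<forall>n. typical_point X \<theta> N \<epsilon> ((\<theta> ^^ n) \<omega>)"
    by (rule AE_funpow_measure_preserving[OF theta_measurable distr_theta AE_typical_point[OF assms]])
  moreover have "AE \<omega> in M. \<forall>n. typical_point X \<theta> N \<epsilon> ((\<sigma> ^^ n) \<omega>)"
    by (rule AE_funpow_measure_preserving[OF sigma_measurable distr_sigma AE_typical_point[OF assms]])
  ultimately show ?thesis using AE_space unfolding typical_orbit_def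
    by eventually_elim blast
qed

definition eps1 :: real where
  "eps1 = 1 / (2 * (real L + 1))"

lemma eps1_pos: "eps1 > 0"
  unfolding eps1_def by simp

lemma small_perturbation:
  assumes "0 \<le> \<epsilon>" "\<epsilon> < eps1"
  shows "small_perturbation (space M) \<theta> \<sigma> \<epsilon> L"
proof -
  have "\<epsilon> * (2 * (real L + 1)) < 1" using assms(2) unfolding eps1_def by (simp add: pos_less_divide_eq)
  then have "real L * \<epsilon> \<le> 1/2" using assms(1) by (simp add: algebra_simps)
  then show ?thesis
    using mutually_inverse assms(1) unfolding small_perturbation_def small_perturbation_axioms_def by blast
qed

text \<open>It is chosen for each \<open>\<epsilon>\<close> separately,
  and the invariant distribution below is redefined on it, because the union over the uncountably
  many \<open>\<epsilon>\<close> need not be a null set.\<close>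

definition atypical_set :: "real \<Rightarrow> 'a set" where
  "atypical_set \<epsilon> = (SOME S. S \<in> null_sets M \<and>
     {\<omega>\<in>space M. \<not> typical_orbit (space M) \<theta> \<sigma> X N \<epsilon> L \<omega>} \<subseteq> S)"

lemma atypical_set:
  assumes "0 \<le> \<epsilon>"
  shows "atypical_set \<epsilon> \<in> null_sets M"
    and "\<omega> \<in> space M \<Longrightarrow> \<omega> \<notin> atypical_set \<epsilon> \<Longrightarrow> typical_orbit (space M) \<theta> \<sigma> X N \<epsilon> L \<omega>"
proof -
  obtain S where "{\<omega>\<in>space M. \<not> typical_orbit (space M) \<theta> \<sigma> X N \<epsilon> L \<omega>} \<subseteq> S"
    "emeasure M S = 0" "S \<in> sets M"
    using AE_typical_orbit[OF assms] by (rule AE_E)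
  then have "\<exists>S. S \<in> null_sets M \<and> {\<omega>\<in>space M. \<not> typical_orbit (space M) \<theta> \<sigma> X N \<epsilon> L \<omega>} \<subseteq> S"
    by blast
  then have "atypical_set \<epsilon> \<in> null_sets M \<and>
      {\<omega>\<in>space M. \<not> typical_orbit (space M) \<theta> \<sigma> X N \<epsilon> L \<omega>} \<subseteq> atypical_set \<epsilon>"
    unfolding atypical_set_def by (rule someI_ex)
  then show "atypical_set \<epsilon> \<in> null_sets M"
    and "\<omega> \<in> space M \<Longrightarrow> \<omega> \<notin> atypical_set \<epsilon> \<Longrightarrow> typical_orbit (space M) \<theta> \<sigma> X N \<epsilon> L \<omega>"
    by blast+
qed

definition limit_state :: "'a \<Rightarrow> 'k" where
  "limit_state \<omega> = (if \<exists>i. pullback_limit X \<sigma> 0 \<omega> = axis i 1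
     then THE i. pullback_limit X \<sigma> 0 \<omega> = axis i 1 else undefined)"

definition inv_dist :: "real \<Rightarrow> 'a \<Rightarrow> real^'k" where
  "inv_dist \<epsilon> \<omega> = (if \<omega> \<in> atypical_set \<epsilon> then axis (limit_state \<omega>) 1 else pullback_limit X \<sigma> \<epsilon> \<omega>)"

lemma pullback_limit_borel_measurable: "0 \<le> \<epsilon> \<Longrightarrow> pullback_limit X \<sigma> \<epsilon> \<in> borel_measurable M"
  using MRN_cocycle unfolding MRN_cocycle_def
  by (intro pullback_limit_measurable sigma_measurable distr_sigma) blast

lemma limit_state_measurable: "limit_state \<in> M \<rightarrow>\<^sub>M count_space UNIV"
proof (subst measurable_count_space_eq2[OF finite_class.finite_UNIV], intro conjI ballI)
  fix a :: 'k
  let ?P = "pullback_limit X \<sigma> 0"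
  have "limit_state -` {a} \<inter> space M = (?P -` {axis a 1} \<inter> space M) \<union>
      (if a = undefined then space M - (?P -` range (\<lambda>i. axis i 1) \<inter> space M) else {})"
  proof (intro set_eqI)
    fix \<omega>
    show "\<omega> \<in> limit_state -` {a} \<inter> space M \<longleftrightarrow> \<omega> \<in> (?P -` {axis a 1} \<inter> space M) \<union>
      (if a = undefined then space M - (?P -` range (\<lambda>i. axis i 1) \<inter> space M) else {})"
    proof (cases "\<exists>i. ?P \<omega> = axis i 1")
      case True
      then obtain i where i: "?P \<omega> = axis i 1" by blast
      then have "limit_state \<omega> = i" unfolding limit_state_def by (auto simp: axis_eq_axis)
      then show ?thesis using i by (auto simp: axis_eq_axis)
    qed (auto simp: limit_state_def)
  qed
  moreover have "?P -` {axis a 1} \<inter> space M \<in> sets M"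
    by (rule measurable_sets[OF pullback_limit_borel_measurable borel_closed[OF closed_singleton]]) simp
  moreover have "?P -` range (\<lambda>i. axis i 1) \<inter> space M \<in> sets M"
    by (rule measurable_sets[OF pullback_limit_borel_measurable borel_closed[OF finite_imp_closed]])
      simp_all
  ultimately show "limit_state -` {a} \<inter> space M \<in> sets M" by auto
qed simp

lemma inv_dist_measurable: "0 \<le> \<epsilon> \<Longrightarrow> inv_dist \<epsilon> \<in> borel_measurable M"
proof -
  assume "0 \<le> \<epsilon>"
  have "(\<lambda>\<omega>. axis (limit_state \<omega>) 1 :: real^'k) \<in> borel_measurable M"
    by (rule measurable_compose[OF limit_state_measurable]) simp
  moreover have "{\<omega>\<in>space M. \<omega> \<in> atypical_set \<epsilon>} \<in> sets M"
    using atypical_set(1)[OF \<open>0 \<le> \<epsilon>\<close>] by (auto simp: Int_def[symmetric] Collect_mem_eq)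
  ultimately show ?thesis
    unfolding inv_dist_def[abs_def]
    by (rule measurable_If[OF _ pullback_limit_borel_measurable[OF \<open>0 \<le> \<epsilon>\<close>]])
qed

lemma inv_dist_simplex: "inv_dist \<epsilon> \<omega> \<in> simplex1"
  unfolding inv_dist_def by (simp add: axis_in_simplex pullback_limit_simplex)

lemma inv_dist_attracts:
  assumes "0 \<le> \<epsilon>" "\<epsilon> < eps1"
  shows "invariant_distribution M \<theta> (X \<epsilon>) (inv_dist \<epsilon>)"
    and "q \<in> simplex1 \<Longrightarrow>
      AE \<omega> in M. (\<lambda>n. l1norm (X \<epsilon> n ((\<sigma> ^^ n) \<omega>) *v q - inv_dist \<epsilon> \<omega>)) \<longlonglongrightarrow> 0"
    and "q \<in> simplex1 \<Longrightarrow>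
      AE \<omega> in M. (\<lambda>n. l1norm (X \<epsilon> n \<omega> *v q - inv_dist \<epsilon> ((\<theta> ^^ n) \<omega>))) \<longlonglongrightarrow> 0"
proof -
  interpret small_perturbation "space M" \<theta> \<sigma> X N \<epsilon> L by (rule small_perturbation[OF assms])
  have typical: "AE \<omega> in M. \<omega> \<notin> atypical_set \<epsilon> \<and> typical \<omega>"
    using AE_not_in[OF atypical_set(1)[OF assms(1)]] AE_space
    by eventually_elim (use atypical_set(2)[OF assms(1)] in blast)
  have "AE \<omega> in M. \<forall>n. (\<theta> ^^ n) \<omega> \<notin> atypical_set \<epsilon>"
    by (rule AE_funpow_measure_preserving[OF theta_measurable distr_theta
          AE_not_in[OF atypical_set(1)[OF assms(1)]]])
  with typical have "AE \<omega> in M. \<forall>n. X \<epsilon> n \<omega> *v inv_dist \<epsilon> \<omega> = inv_dist \<epsilon> ((\<theta> ^^ n) \<omega>)"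
    by eventually_elim (simp add: inv_dist_def pullback_limit_invariant)
  then show "invariant_distribution M \<theta> (X \<epsilon>) (inv_dist \<epsilon>)"
    unfolding invariant_distribution_def using inv_dist_measurable[OF assms(1)] inv_dist_simplex
    by blast
  show "AE \<omega> in M. (\<lambda>n. l1norm (X \<epsilon> n ((\<sigma> ^^ n) \<omega>) *v q - inv_dist \<epsilon> \<omega>)) \<longlonglongrightarrow> 0"
    if "q \<in> simplex1"
    using typical by eventually_elim (simp add: inv_dist_def pullback_limit_attracts[OF _ that])
  show "AE \<omega> in M. (\<lambda>n. l1norm (X \<epsilon> n \<omega> *v q - inv_dist \<epsilon> ((\<theta> ^^ n) \<omega>))) \<longlonglongrightarrow> 0"
    if "q \<in> simplex1"
    using typical \<open>AE \<omega> in M. \<forall>n. (\<theta> ^^ n) \<omega> \<notin> atypical_set \<epsilon>\<close>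
    by eventually_elim (simp add: inv_dist_def pullback_limit_forward_attracts[OF _ that])
qed

lemma inv_dist_near_limit_state:
  assumes typical0: "typical_orbit (space M) \<theta> \<sigma> X N 0 L \<omega>"
    and sync: "\<forall>i j. drn_map (X 0) n ((\<sigma> ^^ n) \<omega>) i = drn_map (X 0) n ((\<sigma> ^^ n) \<omega>) j"
  shows "limit_state \<omega> = drn_map (X 0) n ((\<sigma> ^^ n) \<omega>) undefined"
    and "0 \<le> \<epsilon> \<Longrightarrow> \<epsilon> < eps1 \<Longrightarrow> l1norm (inv_dist \<epsilon> \<omega> - axis (limit_state \<omega>) 1) \<le> real n * \<epsilon>"
proof -
  define c where "c = drn_map (X 0) n ((\<sigma> ^^ n) \<omega>) undefined"
  interpret unperturbed: small_perturbation "space M" \<theta> \<sigma> X N 0 L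
    by (rule small_perturbation[OF order_refl eps1_pos])
  have "l1norm (pullback_limit X \<sigma> 0 \<omega> - axis c 1) \<le> real n * 0"
    unfolding c_def by (rule unperturbed.pullback_limit_near_axis[OF typical0 sync])
  then have "pullback_limit X \<sigma> 0 \<omega> = axis c 1" using l1norm_le_zero_imp_zero by fastforce
  then show c: "limit_state \<omega> = c" unfolding limit_state_def by (auto simp: axis_eq_axis)
  assume \<epsilon>: "0 \<le> \<epsilon>" "\<epsilon> < eps1"
  interpret small_perturbation "space M" \<theta> \<sigma> X N \<epsilon> L by (rule small_perturbation[OF \<epsilon>])
  show "l1norm (inv_dist \<epsilon> \<omega> - axis (limit_state \<omega>) 1) \<le> real n * \<epsilon>"
  proof (cases "\<omega> \<in> atypical_set \<epsilon>")
    case True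
    then show ?thesis using \<epsilon> unfolding inv_dist_def by (simp add: l1norm_def)
  next
    case False
    have "\<omega> \<in> space M" using typical0 unfolding typical_orbit_def by blast
    then have "typical \<omega>" using atypical_set(2)[OF \<epsilon>(1) _ False] by blast
    then show ?thesis using pullback_limit_near_axis[OF _ sync] False c unfolding inv_dist_def c_def by simp
  qed
qed

lemma AE_synchronized_typical:
  "AE \<omega> in M. typical_orbit (space M) \<theta> \<sigma> X N 0 L \<omega> \<and>
     (\<exists>n. \<forall>i j. drn_map (X 0) n ((\<sigma> ^^ n) \<omega>) i = drn_map (X 0) n ((\<sigma> ^^ n) \<omega>) j)"
  using AE_typical_orbit[OF order_refl]
proof eventually_elim
  case (elim \<omega>)
  then have "\<forall>m. \<exists>t\<ge>m. N ((\<sigma> ^^ t) \<omega>) \<le> L" and typical: "\<forall>n. typical_point X \<theta> N 0 ((\<sigma> ^^ n) \<omega>)"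
    unfolding typical_orbit_def by simp_all
  then obtain t where "t \<ge> L" "N ((\<sigma> ^^ t) \<omega>) \<le> L" by blast
  then have "\<forall>i j. drn_map (X 0) t ((\<sigma> ^^ t) \<omega>) i = drn_map (X 0) t ((\<sigma> ^^ t) \<omega>) j"
    using typical_point_synchronized[OF typical[rule_format, of t]] by simp
  with elim show ?case by blast
qed

lemma inv_dist_tendsto_limit_state:
  "AE \<omega> in M. ((\<lambda>\<epsilon>. l1norm (inv_dist \<epsilon> \<omega> - axis (limit_state \<omega>) 1)) \<longlongrightarrow> 0) (at_right 0) \<and>
     inv_dist 0 \<omega> = axis (limit_state \<omega>) 1"
  using AE_synchronized_typical
proof eventually_elim
  case (elim \<omega>)
  then obtain n where bound: "\<And>\<epsilon>. 0 \<le> \<epsilon> \<Longrightarrow> \<epsilon> < eps1 \<Longrightarrow>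
      l1norm (inv_dist \<epsilon> \<omega> - axis (limit_state \<omega>) 1) \<le> real n * \<epsilon>"
    using inv_dist_near_limit_state(2) by blast
  have "((\<lambda>\<epsilon>. l1norm (inv_dist \<epsilon> \<omega> - axis (limit_state \<omega>) 1)) \<longlongrightarrow> 0) (at_right 0)"
  proof (rule tendsto_sandwich[where f="\<lambda>_. 0" and h="\<lambda>\<epsilon>. real n * \<epsilon>"])
    show "\<forall>\<^sub>F \<epsilon> in at_right 0. 0 \<le> l1norm (inv_dist \<epsilon> \<omega> - axis (limit_state \<omega>) 1)"
      by (simp add: l1norm_nonneg)
    show "\<forall>\<^sub>F \<epsilon> in at_right 0. l1norm (inv_dist \<epsilon> \<omega> - axis (limit_state \<omega>) 1) \<le> real n * \<epsilon>"
      unfolding eventually_at_right_field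
      by (intro exI[of _ eps1] conjI allI impI eps1_pos bound) simp_all
    show "((\<lambda>\<epsilon>. real n * \<epsilon>) \<longlongrightarrow> 0) (at_right 0)"
      by (rule tendsto_mult_right_zero[OF tendsto_ident_at])
  qed simp
  moreover have "inv_dist 0 \<omega> - axis (limit_state \<omega>) 1 = 0"
    using bound[OF order_refl eps1_pos] by (intro l1norm_le_zero_imp_zero) simp
  ultimately show ?case by simp
qed

text \<open>Under uniform synchronization the unperturbed network started anywhere on a backward orbit
  synchronizes after the same number \<open>c\<close> of steps, which makes the bound \<open>c \<epsilon>\<close> uniform.\<close>

lemma AE_uniformly_synchronized_typical:
  assumes "uniformly_synchronized M \<theta> (X 0)"
  obtains c where "AE \<omega> in M. typical_orbit (space M) \<theta> \<sigma> X N 0 L \<omega> \<and>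
    (\<forall>i j. drn_map (X 0) c ((\<sigma> ^^ c) \<omega>) i = drn_map (X 0) c ((\<sigma> ^^ c) \<omega>) j)"
proof -
  obtain N' c where "AE \<omega> in M. N' \<omega> = c"
    and "AE \<omega> in M. \<forall>i j. \<forall>n\<ge>N' \<omega>. drn_map (X 0) n \<omega> i = drn_map (X 0) n \<omega> j"
    using assms unfolding uniformly_synchronized_def by blast
  then have "AE \<omega> in M. \<forall>i j. drn_map (X 0) c \<omega> i = drn_map (X 0) c \<omega> j"
    by eventually_elim auto
  then have "AE \<omega> in M. \<forall>n i j. drn_map (X 0) c ((\<sigma> ^^ n) \<omega>) i = drn_map (X 0) c ((\<sigma> ^^ n) \<omega>) j"
    by (rule AE_funpow_measure_preserving[OF sigma_measurable distr_sigma])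
  with AE_typical_orbit[OF order_refl] have "AE \<omega> in M. typical_orbit (space M) \<theta> \<sigma> X N 0 L \<omega> \<and>
      (\<forall>i j. drn_map (X 0) c ((\<sigma> ^^ c) \<omega>) i = drn_map (X 0) c ((\<sigma> ^^ c) \<omega>) j)"
    by eventually_elim blast
  then show ?thesis by (rule that)
qed

lemma inv_dist_uniform_convergence:
  assumes "uniformly_synchronized M \<theta> (X 0)"
  shows "\<exists>\<Omega>0\<in>sets M. measure M \<Omega>0 = 1 \<and>
    (\<forall>\<delta>>0. \<exists>\<eta>>0. \<forall>\<epsilon>. 0 < \<epsilon> \<and> \<epsilon> < \<eta> \<longrightarrow>
      (\<forall>\<omega>\<in>\<Omega>0. l1norm (inv_dist \<epsilon> \<omega> - axis (limit_state \<omega>) 1) < \<delta>))"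
proof -
  obtain c where "AE \<omega> in M. typical_orbit (space M) \<theta> \<sigma> X N 0 L \<omega> \<and>
      (\<forall>i j. drn_map (X 0) c ((\<sigma> ^^ c) \<omega>) i = drn_map (X 0) c ((\<sigma> ^^ c) \<omega>) j)"
    by (rule AE_uniformly_synchronized_typical[OF assms])
  then obtain U where U: "{\<omega>\<in>space M. \<not> (typical_orbit (space M) \<theta> \<sigma> X N 0 L \<omega> \<and>
      (\<forall>i j. drn_map (X 0) c ((\<sigma> ^^ c) \<omega>) i = drn_map (X 0) c ((\<sigma> ^^ c) \<omega>) j))} \<subseteq> U"
    "emeasure M U = 0" "U \<in> sets M"
    by (rule AE_E)
  have "l1norm (inv_dist \<epsilon> \<omega> - axis (limit_state \<omega>) 1) < \<delta>"
    if "\<omega> \<in> space M - U" "0 < \<epsilon>" "\<epsilon> < min eps1 (\<delta> / (real c + 1))" for \<omega> \<epsilon> \<delta>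
  proof -
    have "typical_orbit (space M) \<theta> \<sigma> X N 0 L \<omega>"
      "\<forall>i j. drn_map (X 0) c ((\<sigma> ^^ c) \<omega>) i = drn_map (X 0) c ((\<sigma> ^^ c) \<omega>) j"
      using U(1) that(1) by blast+
    then have "l1norm (inv_dist \<epsilon> \<omega> - axis (limit_state \<omega>) 1) \<le> real c * \<epsilon>"
      using inv_dist_near_limit_state(2) that(2,3) by simp
    also have "\<dots> \<le> (real c + 1) * \<epsilon>" using that(2) by (simp add: algebra_simps)
    also have "\<dots> < (real c + 1) * (\<delta> / (real c + 1))"
      using that(3) by (intro mult_strict_left_mono) auto
    finally show ?thesis by simp
  qed
  moreover have "min eps1 (\<delta> / (real c + 1)) > 0" if "\<delta> > 0" for \<delta> using eps1_pos that by simp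
  moreover have "measure M (space M - U) = 1"
    using U(2,3) prob_compl[of U] by (simp add: emeasure_eq_measure)
  ultimately show ?thesis using U(3) by blast
qed

end

theorem theoremA:
  fixes M :: "'a::polish_space measure" and \<theta> :: "'a \<Rightarrow> 'a"
    and X :: "real \<Rightarrow> nat \<Rightarrow> 'a \<Rightarrow> real^'k::finite^'k"
  assumes "CARD('k) \<ge> 2"
    and "invertible_ergodic_mds M \<theta>"
    and "markov_perturbation M \<theta> X"
    and "synchronized M \<theta> (X 0)"
  shows "\<exists>\<epsilon>1>0. \<exists>p :: real \<Rightarrow> 'a \<Rightarrow> real^'k.
     (\<forall>\<epsilon>. 0 \<le> \<epsilon> \<and> \<epsilon> < \<epsilon>1 \<longrightarrow>
        invariant_distribution M \<theta> (X \<epsilon>) (p \<epsilon>) \<and>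
        (\<forall>q\<in>simplex1. AE \<omega> in M.
           (\<lambda>n. l1norm (X \<epsilon> n ((inv_into (space M) \<theta> ^^ n) \<omega>) *v q - p \<epsilon> \<omega>)) \<longlonglongrightarrow> 0) \<and>
        (\<forall>q\<in>simplex1. AE \<omega> in M.
           (\<lambda>n. l1norm (X \<epsilon> n \<omega> *v q - p \<epsilon> ((\<theta> ^^ n) \<omega>))) \<longlonglongrightarrow> 0)) \<and>
     (\<exists>J :: 'a \<Rightarrow> 'k. J \<in> M \<rightarrow>\<^sub>M count_space UNIV \<and>
        (AE \<omega> in M. ((\<lambda>\<epsilon>. l1norm (p \<epsilon> \<omega> - axis (J \<omega>) 1)) \<longlongrightarrow> 0) (at_right 0) \<and>
                     p 0 \<omega> = axis (J \<omega>) 1) \<and>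
        (uniformly_synchronized M \<theta> (X 0) \<longrightarrow>
           (\<exists>\<Omega>0\<in>sets M. measure M \<Omega>0 = 1 \<and>
              (\<forall>\<delta>>0. \<exists>\<eta>>0. \<forall>\<epsilon>. 0 < \<epsilon> \<and> \<epsilon> < \<eta> \<longrightarrow>
                 (\<forall>\<omega>\<in>\<Omega>0. l1norm (p \<epsilon> \<omega> - axis (J \<omega>) 1) < \<delta>)))))"
proof -
  obtain N where N: "N \<in> M \<rightarrow>\<^sub>M count_space UNIV"
    and sync: "AE \<omega> in M. \<forall>i j. \<forall>n\<ge>N \<omega>. drn_map (X 0) n \<omega> i = drn_map (X 0) n \<omega> j"
    using assms(4) unfolding synchronized_def by blast
  have "prob_space M"
    using assms(2) unfolding invertible_ergodic_mds_def standard_prob_space_def by blast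
  then obtain L where "measure M {x\<in>space M. N x \<le> L} > 0"
    using sublevel_set_pos_measure[OF _ N] by blast
  moreover note sets_sublevel[OF N, of L]
  ultimately interpret synchronized_perturbation M \<theta> X N L
    using assms(2,3) sync by unfold_locales
  show ?thesis
  proof (intro exI[of _ eps1] exI[of _ inv_dist] conjI exI[of _ limit_state])
    show "\<forall>\<epsilon>. 0 \<le> \<epsilon> \<and> \<epsilon> < eps1 \<longrightarrow> invariant_distribution M \<theta> (X \<epsilon>) (inv_dist \<epsilon>) \<and>
      (\<forall>q\<in>simplex1. AE \<omega> in M. (\<lambda>n. l1norm (X \<epsilon> n ((\<sigma> ^^ n) \<omega>) *v q - inv_dist \<epsilon> \<omega>)) \<longlonglongrightarrow> 0) \<and>
      (\<forall>q\<in>simplex1. AE \<omega> in M. (\<lambda>n. l1norm (X \<epsilon> n \<omega> *v q - inv_dist \<epsilon> ((\<theta> ^^ n) \<omega>))) \<longlonglongrightarrow> 0)"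
      using inv_dist_attracts by simp
  qed (use eps1_pos limit_state_measurable inv_dist_tendsto_limit_state
        inv_dist_uniform_convergence in simp_all)
qed

end
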